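(* Assume $n$ is sufficiently large and $2\le r<\sqrt[5]{\ln n}$. Let $H=(V,E)$ be an $n$-uniform hypergraph with $|E|\le 0.01\left(\frac{n}{\ln n}\right)^{\frac{r-1}{r}}r^{n-1}$. If the weights $\sigma(v)$, $v\in V$, are independent and uniform on $[0,1)$, then the probability that the coloring $C^0$ produced by Algorithm 1 has a monochromatic edge is at most $0.04e$.
   Context: Colors are $\{1,\dots,r\}$. Put $p=\frac{r-1}{r}\cdot\frac{\ln(n/\ln n)}{n}$. Partition $[0,1)$ into consecutive half-open intervals $\Delta_1,\delta_1,\Delta_2,\dots,\delta_{r-1},\Delta_r$ (left to right), $\Delta_i=\big[(i-1)(\tfrac{1-p}{r}+\tfrac{p}{r-1}),\ i\tfrac{1-p}{r}+(i-1)\tfrac{p}{r-1}\big)$, $\delta_i=\big[i\tfrac{1-p}{r}+(i-1)\tfrac{p}{r-1},\ i(\tfrac{1-p}{r}+\tfrac{p}{r-1})\big)$. A vertex $v$ belongs to interval $I$ if $\sigma(v)\in I$. Algorithm 1 (for injective $\sigma$, which holds almost surely): every vertex in $\Delta_i$ gets color $i$; then the vertices in $\bigcup_i\delta_i$ are processed in increasing order of weight, and $v\in\delta_i$ gets color $i$ unless some edge containing $v$ has all its other vertices already colored $i$, in which case $v$ gets color $i+1$. The resulting coloring is $C^0$. An edge is monochromatic if all its vertices have the same color. *)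

theory Defs
  imports "HOL-Probability.Probability"
begin

definition pcol :: "nat \<Rightarrow> nat \<Rightarrow> real" where
  "pcol r n = (real r - 1) / real r * ln (real n / ln (real n)) / real n"

text \<open>Interval Delta_i, i = 1..r (left-closed, right-open).\<close>
definition BigI :: "nat \<Rightarrow> nat \<Rightarrow> nat \<Rightarrow> real set" where
  "BigI r n i = (let p = pcol r n; a = (1 - p) / real r; b = p / (real r - 1) in
     {(real i - 1) * (a + b) ..< real i * a + (real i - 1) * b})"

text \<open>Interval delta_i, i = 1..r-1 (left-closed, right-open).\<close>
definition SmallI :: "nat \<Rightarrow> nat \<Rightarrow> nat \<Rightarrow> real set" where
  "SmallI r n i = (let p = pcol r n; a = (1 - p) / real r; b = p / (real r - 1) in
     {real i * a + (real i - 1) * b ..< real i * (a + b)})"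

text \<open>Vertex u is already colored at the moment vertex v (in some delta_i) is processed:
  either u lies in some Delta_j (colored at the start), or u lies in some delta_j
  and has smaller weight than v.\<close>
definition already_colored :: "nat \<Rightarrow> nat \<Rightarrow> ('a \<Rightarrow> real) \<Rightarrow> 'a \<Rightarrow> 'a \<Rightarrow> bool" where
  "already_colored r n \<sigma> v u \<longleftrightarrow>
     (\<exists>j\<in>{1..r}. \<sigma> u \<in> BigI r n j) \<or>
     ((\<exists>j\<in>{1..<r}. \<sigma> u \<in> SmallI r n j) \<and> \<sigma> u < \<sigma> v)"

text \<open>c is the output of Algorithm 1 on hypergraph (V,E) with weights sigma
  (colors are 1..r; c is 0 outside V).\<close>
definition alg1_output :: "nat \<Rightarrow> nat \<Rightarrow> 'a set \<Rightarrow> 'a set set \<Rightarrow> ('a \<Rightarrow> real) \<Rightarrow> ('a \<Rightarrow> nat) \<Rightarrow> bool" where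
  "alg1_output r n V E \<sigma> c \<longleftrightarrow>
     (\<forall>v\<in>V. \<forall>i\<in>{1..r}. \<sigma> v \<in> BigI r n i \<longrightarrow> c v = i) \<and>
     (\<forall>v\<in>V. \<forall>i\<in>{1..<r}. \<sigma> v \<in> SmallI r n i \<longrightarrow>
        c v = (if \<exists>e\<in>E. v \<in> e \<and> (\<forall>u\<in>e - {v}. already_colored r n \<sigma> v u \<and> c u = i)
               then i + 1 else i)) \<and>
     (\<forall>v. v \<notin> V \<longrightarrow> c v = 0)"

text \<open>The coloring C^0 (meaningful for injective sigma, where it is unique).\<close>
definition C0 :: "nat \<Rightarrow> nat \<Rightarrow> 'a set \<Rightarrow> 'a set set \<Rightarrow> ('a \<Rightarrow> real) \<Rightarrow> 'a \<Rightarrow> nat" where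
  "C0 r n V E \<sigma> = (THE c. alg1_output r n V E \<sigma> c)"

definition has_mono_edge :: "'a set set \<Rightarrow> ('a \<Rightarrow> nat) \<Rightarrow> bool" where
  "has_mono_edge E c \<longleftrightarrow> (\<exists>e\<in>E. \<exists>k. \<forall>u\<in>e. c u = k)"

definition weight_space :: "'a set \<Rightarrow> ('a \<Rightarrow> real) measure" where
  "weight_space V = PiM V (\<lambda>_. uniform_measure lborel {0..<1::real})"

end

(*
  Let an edge be monochromatic of colour k. None of its vertices lies in \<delta>_k: the heaviest one
  would have been recoloured k + 1. So either the whole edge lies in \<Delta>_k, which has probability
  at most a^n with a = (1 - p)/r, or its lightest vertex W_1 in \<delta>_(k-1) was recoloured because
  of an edge e_1 whose other vertices have colour k - 1. Repeating the argument in e_1 with the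
  lightest vertex W_2 in \<delta>_(k-2), and so on, produces a chain e_0, ..., e_l of edges in which
  consecutive edges share exactly the vertex W_j \<in> \<delta>_(k-j) and every other vertex of e_j has
  weight between those of W_(j+1) and W_j. Once each link weight is pinned to one of n cells of
  its \<delta>-interval, the chain forces all its weights into a product box of measure at most
  h^l a^((l+1)n - 2l) exp(n l (b + h)/a), where b = p/(r - 1) and h = b/n. The union bound over
  colours, chains and cells gives at most r Y + \<Sum>_k \<Sum>_l Y Z^l with Y = |E| a^n and
  Z = |E| b a^(n-2) exp(n (b + h)/a), and the hypothesis on |E| makes r Y \<le> 0.01 and Z \<le> 1/2.
*)

theory Submission
  imports Defs
begin

section \<open>Interval geometry\<close>

definition big_width :: "nat \<Rightarrow> nat \<Rightarrow> real" where
  "big_width r n = (1 - pcol r n) / real r"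

definition small_width :: "nat \<Rightarrow> nat \<Rightarrow> real" where
  "small_width r n = pcol r n / (real r - 1)"

definition big_start :: "nat \<Rightarrow> nat \<Rightarrow> nat \<Rightarrow> real" where
  "big_start r n i = (real i - 1) * (big_width r n + small_width r n)"

definition small_start :: "nat \<Rightarrow> nat \<Rightarrow> nat \<Rightarrow> real" where
  "small_start r n i = big_start r n i + big_width r n"

lemma BigI_eq: "BigI r n i = {big_start r n i ..< small_start r n i}"
  unfolding BigI_def Let_def big_width_def[symmetric] small_width_def[symmetric]
    small_start_def big_start_def
  by (simp add: algebra_simps)

lemma SmallI_eq: "SmallI r n i = {small_start r n i ..< big_start r n (Suc i)}"
  unfolding SmallI_def Let_def big_width_def[symmetric] small_width_def[symmetric]
    small_start_def big_start_def
  by (simp add: algebra_simps)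

lemma big_start_Suc: "big_start r n (Suc i) = small_start r n i + small_width r n"
  unfolding small_start_def big_start_def by (simp add: algebra_simps)

locale alg1_intervals =
  fixes r n :: nat
  assumes two_le_r: "2 \<le> r" and pcol_pos: "0 < pcol r n" and pcol_less_1: "pcol r n < 1"
begin

abbreviation "a \<equiv> big_width r n"
abbreviation "b \<equiv> small_width r n"

lemma big_width_pos: "a > 0"
  using two_le_r pcol_less_1 by (simp add: big_width_def)

lemma small_width_pos: "b > 0"
  using two_le_r pcol_pos by (simp add: small_width_def)

lemma small_start_r: "small_start r n r = 1"
  using two_le_r
  by (simp add: small_start_def big_start_def big_width_def small_width_def field_simps)

lemma big_start_le_iff: "big_start r n i \<le> big_start r n j \<longleftrightarrow> i \<le> j"
  using big_width_pos small_width_pos by (simp add: big_start_def)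

lemma big_start_Suc_le: "i < j \<Longrightarrow> big_start r n (Suc i) \<le> big_start r n j"
  by (simp add: big_start_le_iff)

lemma small_start_bounds:
  "big_start r n i < small_start r n i" "small_start r n i < big_start r n (Suc i)"
  using big_width_pos small_width_pos by (simp_all add: small_start_def big_start_Suc)

lemma BigI_unique: "x \<in> BigI r n i \<Longrightarrow> x \<in> BigI r n j \<Longrightarrow> i = j"
  using big_start_Suc_le[of i j] big_start_Suc_le[of j i] small_start_bounds[of i] small_start_bounds[of j]
  by (cases i j rule: linorder_cases) (auto simp: BigI_eq SmallI_eq)

lemma SmallI_unique: "x \<in> SmallI r n i \<Longrightarrow> x \<in> SmallI r n j \<Longrightarrow> i = j"
  using big_start_Suc_le[of i j] big_start_Suc_le[of j i] small_start_bounds[of i] small_start_bounds[of j]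
  by (cases i j rule: linorder_cases) (auto simp: BigI_eq SmallI_eq)

lemma BigI_SmallI_disjoint: "x \<in> BigI r n i \<Longrightarrow> x \<in> SmallI r n j \<Longrightarrow> False"
  using big_start_Suc_le[of i j] big_start_Suc_le[of j i] small_start_bounds[of i] small_start_bounds[of j]
  by (cases i j rule: linorder_cases) (auto simp: BigI_eq SmallI_eq)

lemma SmallI_less_BigI: "x \<in> SmallI r n i \<Longrightarrow> y \<in> BigI r n j \<Longrightarrow> i < j \<Longrightarrow> x < y"
  using big_start_Suc_le[of i j] by (auto simp: BigI_eq SmallI_eq)

lemma BigI_less_SmallI: "x \<in> BigI r n i \<Longrightarrow> y \<in> SmallI r n j \<Longrightarrow> i \<le> j \<Longrightarrow> x < y"
  using big_start_le_iff[of i j] by (auto simp: BigI_eq SmallI_eq small_start_def)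

lemma SmallI_less_SmallI: "x \<in> SmallI r n i \<Longrightarrow> y \<in> SmallI r n j \<Longrightarrow> i < j \<Longrightarrow> x < y"
  using big_start_Suc_le[of i j] small_start_bounds[of j] by (auto simp: BigI_eq SmallI_eq)

lemma weight_interval_cases:
  assumes "0 \<le> x" "x < 1"
  shows "(\<exists>i\<in>{1..r}. x \<in> BigI r n i) \<or> (\<exists>i\<in>{1..<r}. x \<in> SmallI r n i)"
proof -
  define k where "k = nat \<lfloor>x / (a + b)\<rfloor>"
  have period_pos: "a + b > 0"
    using big_width_pos small_width_pos by simp
  have "real k = of_int \<lfloor>x / (a + b)\<rfloor>"
    using assms period_pos by (simp add: k_def)
  then have "real k \<le> x / (a + b)" "x / (a + b) < real k + 1"
    by linarith+
  then have k: "big_start r n (Suc k) \<le> x" "x < big_start r n (Suc (Suc k))"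
    using period_pos by (simp_all add: big_start_def field_simps)
  have "k < r"
    using k(1) assms(2) small_start_bounds[of r] small_start_r
    by (metis big_start_le_iff not_less_eq_eq order.strict_trans1 order_less_le)
  show ?thesis
  proof (cases "x < small_start r n (Suc k)")
    case True
    then have "x \<in> BigI r n (Suc k)"
      using k by (simp add: BigI_eq)
    then show ?thesis
      using \<open>k < r\<close> by auto
  next
    case False
    then have "Suc k \<noteq> r"
      using assms(2) small_start_r by auto
    moreover have "x \<in> SmallI r n (Suc k)"
      using False k by (simp add: SmallI_eq)
    ultimately show ?thesis
      using \<open>k < r\<close> by auto
  qed
qed

end

section \<open>The colouring \<open>C0\<close> is well defined\<close>

definition blocked_colour ::
    "nat \<Rightarrow> nat \<Rightarrow> 'a set set \<Rightarrow> ('a \<Rightarrow> real) \<Rightarrow> ('a \<Rightarrow> nat) \<Rightarrow> 'a \<Rightarrow> nat \<Rightarrow> bool" where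
  "blocked_colour r n E \<sigma> c v i \<longleftrightarrow>
     (\<exists>e\<in>E. v \<in> e \<and> (\<forall>u\<in>e - {v}. already_colored r n \<sigma> v u \<and> c u = i))"

lemma alg1_output_iff:
  "alg1_output r n V E \<sigma> c \<longleftrightarrow>
     (\<forall>v\<in>V. \<forall>i\<in>{1..r}. \<sigma> v \<in> BigI r n i \<longrightarrow> c v = i) \<and>
     (\<forall>v\<in>V. \<forall>i\<in>{1..<r}. \<sigma> v \<in> SmallI r n i \<longrightarrow>
        c v = (if blocked_colour r n E \<sigma> c v i then i + 1 else i)) \<and>
     (\<forall>v. v \<notin> V \<longrightarrow> c v = 0)"
  unfolding alg1_output_def blocked_colour_def ..

lemma alg1_output_BigI:
  "alg1_output r n V E \<sigma> c \<Longrightarrow> v \<in> V \<Longrightarrow> i \<in> {1..r} \<Longrightarrow> \<sigma> v \<in> BigI r n i \<Longrightarrow> c v = i"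
  unfolding alg1_output_iff by blast

lemma alg1_output_SmallI:
  "alg1_output r n V E \<sigma> c \<Longrightarrow> v \<in> V \<Longrightarrow> i \<in> {1..<r} \<Longrightarrow> \<sigma> v \<in> SmallI r n i \<Longrightarrow>
    c v = (if blocked_colour r n E \<sigma> c v i then i + 1 else i)"
  unfolding alg1_output_iff by blast

lemma alg1_output_outside: "alg1_output r n V E \<sigma> c \<Longrightarrow> v \<notin> V \<Longrightarrow> c v = 0"
  unfolding alg1_output_iff by blast

lemma blocked_colour_cong:
  assumes "\<And>u. already_colored r n \<sigma> v u \<Longrightarrow> c u = c' u"
  shows "blocked_colour r n E \<sigma> c v i \<longleftrightarrow> blocked_colour r n E \<sigma> c' v i"
proof -
  have "already_colored r n \<sigma> v u \<and> c u = i \<longleftrightarrow> already_colored r n \<sigma> v u \<and> c' u = i" for u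
    using assms[of u] by auto
  then show ?thesis
    unfolding blocked_colour_def by simp
qed

definition weight_rank :: "'a set \<Rightarrow> ('a \<Rightarrow> real) \<Rightarrow> 'a \<Rightarrow> nat" where
  "weight_rank V \<sigma> v = card {u \<in> V. \<sigma> u < \<sigma> v}"

lemma weight_rank_less:
  assumes "finite V" "u \<in> V" "\<sigma> u < \<sigma> v"
  shows "weight_rank V \<sigma> u < weight_rank V \<sigma> v"
  unfolding weight_rank_def by (rule psubset_card_mono) (use assms in auto)

lemma weight_rank_less_card:
  assumes "finite V" "v \<in> V"
  shows "weight_rank V \<sigma> v < card V"
  unfolding weight_rank_def by (rule psubset_card_mono) (use assms in auto)

lemma already_colored_cases:
  assumes "already_colored r n \<sigma> v u" "finite V" "u \<in> V"
  obtains j where "j \<in> {1..r}" "\<sigma> u \<in> BigI r n j"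
  | "weight_rank V \<sigma> u < weight_rank V \<sigma> v"
proof -
  have "(\<exists>j\<in>{1..r}. \<sigma> u \<in> BigI r n j) \<or> \<sigma> u < \<sigma> v"
    using assms(1) unfolding already_colored_def by blast
  then show ?thesis
    using that weight_rank_less[OF assms(2,3)] by blast
qed

definition alg1_step ::
    "nat \<Rightarrow> nat \<Rightarrow> 'a set \<Rightarrow> 'a set set \<Rightarrow> ('a \<Rightarrow> real) \<Rightarrow> ('a \<Rightarrow> nat) \<Rightarrow> 'a \<Rightarrow> nat" where
  "alg1_step r n V E \<sigma> c v =
     (if v \<notin> V then 0
      else if \<exists>i\<in>{1..r}. \<sigma> v \<in> BigI r n i then (SOME i. i \<in> {1..r} \<and> \<sigma> v \<in> BigI r n i)
      else let i = (SOME i. i \<in> {1..<r} \<and> \<sigma> v \<in> SmallI r n i) in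
        if blocked_colour r n E \<sigma> c v i then i + 1 else i)"

definition alg1_colouring ::
    "nat \<Rightarrow> nat \<Rightarrow> 'a set \<Rightarrow> 'a set set \<Rightarrow> ('a \<Rightarrow> real) \<Rightarrow> nat \<Rightarrow> 'a \<Rightarrow> nat" where
  "alg1_colouring r n V E \<sigma> k = (alg1_step r n V E \<sigma> ^^ Suc k) (\<lambda>_. 0)"

lemma alg1_colouring_Suc:
  "alg1_colouring r n V E \<sigma> (Suc k) = alg1_step r n V E \<sigma> (alg1_colouring r n V E \<sigma> k)"
  unfolding alg1_colouring_def by simp

lemma alg1_colouring_outside: "v \<notin> V \<Longrightarrow> alg1_colouring r n V E \<sigma> k v = 0"
  by (cases k) (simp_all add: alg1_step_def alg1_colouring_def)

lemma alg1_step_cong: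
  assumes "\<And>u. already_colored r n \<sigma> v u \<Longrightarrow> c u = c' u"
  shows "alg1_step r n V E \<sigma> c v = alg1_step r n V E \<sigma> c' v"
proof -
  have "blocked_colour r n E \<sigma> c v i \<longleftrightarrow> blocked_colour r n E \<sigma> c' v i" for i
    by (rule blocked_colour_cong) (rule assms)
  then show ?thesis
    unfolding alg1_step_def Let_def by simp
qed

context alg1_intervals
begin

lemma alg1_step_BigI:
  assumes "v \<in> V" "i \<in> {1..r}" "\<sigma> v \<in> BigI r n i"
  shows "alg1_step r n V E \<sigma> c v = i"
proof -
  have "(SOME i. i \<in> {1..r} \<and> \<sigma> v \<in> BigI r n i) = i"
  proof (rule some_equality)
    show "i \<in> {1..r} \<and> \<sigma> v \<in> BigI r n i"
      using assms by blast
  qed (use assms(3) BigI_unique in blast)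
  moreover have "\<exists>i\<in>{1..r}. \<sigma> v \<in> BigI r n i"
    using assms by blast
  ultimately show ?thesis
    using assms(1) unfolding alg1_step_def by (simp only: if_True if_False simp_thms)
qed

lemma alg1_step_SmallI:
  assumes "v \<in> V" "i \<in> {1..<r}" "\<sigma> v \<in> SmallI r n i"
  shows "alg1_step r n V E \<sigma> c v = (if blocked_colour r n E \<sigma> c v i then i + 1 else i)"
proof -
  have "(SOME i. i \<in> {1..<r} \<and> \<sigma> v \<in> SmallI r n i) = i"
  proof (rule some_equality)
    show "i \<in> {1..<r} \<and> \<sigma> v \<in> SmallI r n i"
      using assms by blast
  qed (use assms(3) SmallI_unique in blast)
  moreover have "\<not> (\<exists>i\<in>{1..r}. \<sigma> v \<in> BigI r n i)"
    using assms(3) BigI_SmallI_disjoint by blast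
  ultimately show ?thesis
    using assms(1) unfolding alg1_step_def Let_def by (simp only: if_True if_False simp_thms)
qed

lemma alg1_colouring_BigI:
  "v \<in> V \<Longrightarrow> i \<in> {1..r} \<Longrightarrow> \<sigma> v \<in> BigI r n i \<Longrightarrow> alg1_colouring r n V E \<sigma> k v = i"
  by (simp add: alg1_colouring_def alg1_step_BigI)

text \<open>A vertex only looks at vertices of smaller rank or in some \<open>\<Delta>\<^sub>j\<close>, so its colour is
  final after more iterations than its rank.\<close>

lemma alg1_colouring_stable:
  assumes "finite V" "v \<in> V" "weight_rank V \<sigma> v < k" "weight_rank V \<sigma> v < k'"
  shows "alg1_colouring r n V E \<sigma> k v = alg1_colouring r n V E \<sigma> k' v"
  using assms(2-)
proof (induction "weight_rank V \<sigma> v" arbitrary: v k k' rule: less_induct)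
  case less
  obtain m m' where k: "k = Suc m" "k' = Suc m'"
    using less.prems by (cases k; cases k') auto
  have "alg1_step r n V E \<sigma> (alg1_colouring r n V E \<sigma> m) v =
        alg1_step r n V E \<sigma> (alg1_colouring r n V E \<sigma> m') v"
  proof (rule alg1_step_cong)
    fix u
    assume u: "already_colored r n \<sigma> v u"
    show "alg1_colouring r n V E \<sigma> m u = alg1_colouring r n V E \<sigma> m' u"
    proof (cases "u \<in> V")
      case True
      from u \<open>finite V\<close> True show ?thesis
      proof (cases rule: already_colored_cases)
        case (1 j)
        then show ?thesis
          using True by (simp add: alg1_colouring_BigI)
      next
        case 2
        moreover have "weight_rank V \<sigma> u < m" "weight_rank V \<sigma> u < m'"
          using 2 less.prems k by simp_all
        ultimately show ?thesis
          using less.hyps True by blast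
      qed
    qed (simp add: alg1_colouring_outside)
  qed
  then show ?case
    using k by (simp add: alg1_colouring_Suc)
qed

lemma alg1_output_alg1_colouring:
  assumes "finite V"
  shows "alg1_output r n V E \<sigma> (alg1_colouring r n V E \<sigma> (card V))"
    (is "alg1_output r n V E \<sigma> ?c")
  unfolding alg1_output_iff
proof (intro conjI ballI impI allI)
  fix v i
  assume "v \<in> V" "i \<in> {1..r}" "\<sigma> v \<in> BigI r n i"
  then show "?c v = i"
    by (rule alg1_colouring_BigI)
next
  fix v i
  assume v: "v \<in> V" and i: "i \<in> {1..<r}" and small: "\<sigma> v \<in> SmallI r n i"
  have rank_v: "weight_rank V \<sigma> v < card V"
    using assms v by (rule weight_rank_less_card)
  then obtain m where m: "card V = Suc m"
    by (cases "card V") auto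
  have "?c v = alg1_step r n V E \<sigma> (alg1_colouring r n V E \<sigma> m) v"
    by (simp add: m alg1_colouring_Suc)
  also have "\<dots> = alg1_step r n V E \<sigma> ?c v"
  proof (rule alg1_step_cong)
    fix u
    assume u: "already_colored r n \<sigma> v u"
    show "alg1_colouring r n V E \<sigma> m u = ?c u"
    proof (cases "u \<in> V")
      case True
      from u assms True show ?thesis
      proof (cases rule: already_colored_cases)
        case (1 j)
        then show ?thesis
          using True by (simp add: alg1_colouring_BigI)
      next
        case 2
        then have "weight_rank V \<sigma> u < m" "weight_rank V \<sigma> u < card V"
          using rank_v m by simp_all
        then show ?thesis
          by (rule alg1_colouring_stable[OF assms True])
      qed
    qed (simp add: alg1_colouring_outside)
  qed
  also have "\<dots> = (if blocked_colour r n E \<sigma> ?c v i then i + 1 else i)"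
    using v i small by (rule alg1_step_SmallI)
  finally show "?c v = (if blocked_colour r n E \<sigma> ?c v i then i + 1 else i)" .
next
  fix v
  assume "v \<notin> V"
  then show "?c v = 0"
    by (rule alg1_colouring_outside)
qed

lemma alg1_output_unique:
  assumes "finite V" and weights: "\<forall>v\<in>V. 0 \<le> \<sigma> v \<and> \<sigma> v < 1"
    and c: "alg1_output r n V E \<sigma> c" and c': "alg1_output r n V E \<sigma> c'"
  shows "c = c'"
proof
  fix v
  show "c v = c' v"
  proof (cases "v \<in> V")
    case True
    then show ?thesis
    proof (induction "weight_rank V \<sigma> v" arbitrary: v rule: less_induct)
      case less
      have earlier: "c u = c' u" if "already_colored r n \<sigma> v u" for u
      proof (cases "u \<in> V")
        case True
        from that assms(1) True show ?thesis
        proof (cases rule: already_colored_cases)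
          case (1 j)
          then show ?thesis
            using alg1_output_BigI[OF c True] alg1_output_BigI[OF c' True] by simp
        next
          case 2
          then show ?thesis
            using less.hyps True by blast
        qed
      qed (simp add: alg1_output_outside[OF c] alg1_output_outside[OF c'])
      have "(\<exists>i\<in>{1..r}. \<sigma> v \<in> BigI r n i) \<or> (\<exists>i\<in>{1..<r}. \<sigma> v \<in> SmallI r n i)"
        using weights less.prems weight_interval_cases by blast
      then show ?case
      proof (elim disjE bexE)
        fix i
        assume "i \<in> {1..r}" "\<sigma> v \<in> BigI r n i"
        then show ?thesis
          using alg1_output_BigI[OF c less.prems] alg1_output_BigI[OF c' less.prems] by simp
      next
        fix i
        assume "i \<in> {1..<r}" "\<sigma> v \<in> SmallI r n i"
        moreover have "blocked_colour r n E \<sigma> c v i \<longleftrightarrow> blocked_colour r n E \<sigma> c' v i"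
          by (rule blocked_colour_cong) (rule earlier)
        ultimately show ?thesis
          using alg1_output_SmallI[OF c less.prems] alg1_output_SmallI[OF c' less.prems] by simp
      qed
    qed
  qed (simp add: alg1_output_outside[OF c] alg1_output_outside[OF c'])
qed

lemma alg1_output_C0:
  assumes "finite V" "\<forall>v\<in>V. 0 \<le> \<sigma> v \<and> \<sigma> v < 1"
  shows "alg1_output r n V E \<sigma> (C0 r n V E \<sigma>)"
proof -
  let ?c = "alg1_colouring r n V E \<sigma> (card V)"
  have "alg1_output r n V E \<sigma> ?c"
    using assms(1) by (rule alg1_output_alg1_colouring)
  moreover have "c = ?c" if "alg1_output r n V E \<sigma> c" for c
    using assms that \<open>alg1_output r n V E \<sigma> ?c\<close> by (rule alg1_output_unique)
  ultimately show ?thesis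
    unfolding C0_def by (rule theI)
qed

end

section \<open>Recolouring chains behind a monochromatic edge\<close>

text \<open>\<open>W j \<in> \<delta>\<^sub>k\<^sub>-\<^sub>j\<close> received colour \<open>k - j + 1\<close> because of the edge \<open>F j\<close>, \<open>W (j + 1)\<close> is the
  lightest vertex of \<open>F j\<close> in \<open>\<delta>\<^sub>k\<^sub>-\<^sub>j\<^sub>-\<^sub>1\<close>, and the last edge \<open>F l\<close> has no vertex there.\<close>

definition recolouring_path ::
    "nat \<Rightarrow> nat \<Rightarrow> 'a set set \<Rightarrow> ('a \<Rightarrow> real) \<Rightarrow> nat \<Rightarrow> nat \<Rightarrow> (nat \<Rightarrow> 'a set) \<Rightarrow> (nat \<Rightarrow> 'a) \<Rightarrow> bool"
  where
  "recolouring_path r n E \<sigma> k l F W \<longleftrightarrow>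
    (\<forall>j\<in>{1..l}. F j \<in> E \<and> W j \<in> F j \<and> \<sigma> (W j) \<in> SmallI r n (k - j)) \<and>
    (\<forall>j\<in>{1..<l}. W (Suc j) \<in> F j \<and>
       (\<forall>u\<in>F j - {W j, W (Suc j)}. \<sigma> (W (Suc j)) < \<sigma> u \<and> \<sigma> u < \<sigma> (W j))) \<and>
    (\<forall>u\<in>F l - {W l}. big_start r n (k - l) \<le> \<sigma> u \<and> \<sigma> u < \<sigma> (W l))"

text \<open>Here \<open>es 0\<close> is the monochromatic edge of colour \<open>k\<close> and \<open>W 1\<close> its lightest vertex in
  \<open>\<delta>\<^sub>k\<^sub>-\<^sub>1\<close>.\<close>

definition recolouring_chain ::
    "nat \<Rightarrow> nat \<Rightarrow> 'a set set \<Rightarrow> ('a \<Rightarrow> real) \<Rightarrow> nat \<Rightarrow> nat \<Rightarrow> (nat \<Rightarrow> 'a set) \<Rightarrow> (nat \<Rightarrow> 'a) \<Rightarrow> bool"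
  where
  "recolouring_chain r n E \<sigma> k l es W \<longleftrightarrow>
    es 0 \<in> E \<and> W 1 \<in> es 0 \<and> (\<forall>u\<in>es 0 - {W 1}. \<sigma> (W 1) < \<sigma> u \<and> \<sigma> u < small_start r n k) \<and>
    recolouring_path r n E \<sigma> k l es W"

lemma recolouring_path_Cons:
  assumes path: "recolouring_path r n E \<sigma> (k - 1) l F W" and "1 \<le> l"
    and f: "f \<in> E" "w \<in> f" "W 1 \<in> f" and w: "\<sigma> w \<in> SmallI r n (k - 1)"
    and between: "\<forall>u\<in>f - {w, W 1}. \<sigma> (W 1) < \<sigma> u \<and> \<sigma> u < \<sigma> w"
  defines "F' \<equiv> \<lambda>j. if j = 1 then f else F (j - 1)"
    and "W' \<equiv> \<lambda>j. if j = 1 then w else W (j - 1)"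
  shows "recolouring_path r n E \<sigma> k (Suc l) F' W'"
  unfolding recolouring_path_def
proof (intro conjI)
  have shift: "\<exists>j'. j = Suc j' \<and> j' \<in> {1..l}" if "j \<in> {1..Suc l}" "j \<noteq> 1" for j
    using that by (cases j) auto
  have path': "\<forall>j\<in>{1..l}. F j \<in> E \<and> W j \<in> F j \<and> \<sigma> (W j) \<in> SmallI r n (k - Suc j)"
    "\<forall>j\<in>{1..<l}. W (Suc j) \<in> F j \<and>
       (\<forall>u\<in>F j - {W j, W (Suc j)}. \<sigma> (W (Suc j)) < \<sigma> u \<and> \<sigma> u < \<sigma> (W j))"
    "\<forall>u\<in>F l - {W l}. big_start r n (k - Suc l) \<le> \<sigma> u \<and> \<sigma> u < \<sigma> (W l)"
    using path unfolding recolouring_path_def by auto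
  show "\<forall>j\<in>{1..Suc l}. F' j \<in> E \<and> W' j \<in> F' j \<and> \<sigma> (W' j) \<in> SmallI r n (k - j)"
    using path'(1) f w shift unfolding F'_def W'_def by fastforce
  show "\<forall>j\<in>{1..<Suc l}. W' (Suc j) \<in> F' j \<and>
      (\<forall>u\<in>F' j - {W' j, W' (Suc j)}. \<sigma> (W' (Suc j)) < \<sigma> u \<and> \<sigma> u < \<sigma> (W' j))"
    using path'(2) f between shift unfolding F'_def W'_def by fastforce
  show "\<forall>u\<in>F' (Suc l) - {W' (Suc l)}. big_start r n (k - Suc l) \<le> \<sigma> u \<and> \<sigma> u < \<sigma> (W' (Suc l))"
    using path'(3) \<open>1 \<le> l\<close> unfolding F'_def W'_def by simp
qed

lemma finite_arg_min_obtain: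
  fixes f :: "'a \<Rightarrow> 'b::linorder"
  assumes "finite S" "S \<noteq> {}"
  obtains x where "x \<in> S" "\<forall>y\<in>S. f x \<le> f y"
proof
  show "arg_min_on f S \<in> S"
    using assms by (rule arg_min_if_finite(1))
  show "\<forall>y\<in>S. f (arg_min_on f S) \<le> f y"
    using arg_min_least[OF assms] by blast
qed

lemma finite_arg_max_obtain:
  fixes f :: "'a \<Rightarrow> real"
  assumes "finite S" "S \<noteq> {}"
  obtains x where "x \<in> S" "\<forall>y\<in>S. f y \<le> f x"
  using finite_arg_min_obtain[OF assms, of "\<lambda>x. - f x"] by auto

locale alg1_run = alg1_intervals +
  fixes V :: "'a set" and E :: "'a set set" and \<sigma> :: "'a \<Rightarrow> real" and c :: "'a \<Rightarrow> nat"
  assumes finite_V: "finite V" and edges_subset: "\<forall>e\<in>E. e \<subseteq> V"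
    and weights: "\<forall>v\<in>V. 0 \<le> \<sigma> v \<and> \<sigma> v < 1" and inj_weights: "inj_on \<sigma> V"
    and alg1: "alg1_output r n V E \<sigma> c"
begin

lemma colour_cases:
  assumes "v \<in> V"
  obtains "c v \<in> {1..r}" "\<sigma> v \<in> BigI r n (c v)"
  | "c v \<in> {1..<r}" "\<sigma> v \<in> SmallI r n (c v)"
  | "c v - 1 \<in> {1..<r}" "\<sigma> v \<in> SmallI r n (c v - 1)"
proof -
  have "(\<exists>i\<in>{1..r}. \<sigma> v \<in> BigI r n i) \<or> (\<exists>i\<in>{1..<r}. \<sigma> v \<in> SmallI r n i)"
    using weights assms weight_interval_cases by blast
  then show ?thesis
  proof (elim disjE bexE)
    fix i
    assume "i \<in> {1..r}" "\<sigma> v \<in> BigI r n i"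
    then show ?thesis
      using that(1) alg1_output_BigI[OF alg1 assms] by simp
  next
    fix i
    assume "i \<in> {1..<r}" "\<sigma> v \<in> SmallI r n i"
    moreover from this have "c v = i \<or> c v = i + 1"
      using alg1_output_SmallI[OF alg1 assms] by simp
    ultimately show ?thesis
      using that(2,3) by auto
  qed
qed

lemma edge_in_V: "e \<in> E \<Longrightarrow> u \<in> e \<Longrightarrow> u \<in> V"
  using edges_subset by blast

lemma finite_edge: "e \<in> E \<Longrightarrow> finite e"
  using edges_subset finite_V finite_subset by blast

lemma weight_less_if_ne: "u \<in> V \<Longrightarrow> v \<in> V \<Longrightarrow> \<sigma> u \<le> \<sigma> v \<Longrightarrow> u \<noteq> v \<Longrightarrow> \<sigma> u < \<sigma> v"
  using inj_weights unfolding inj_on_def by force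

lemma colour_lower_bound:
  assumes "u \<in> V" "c u = j"
  shows "big_start r n j \<le> \<sigma> u \<or> 2 \<le> j \<and> \<sigma> u \<in> SmallI r n (j - 1)"
  using assms(1) small_start_bounds[of j]
  by (cases rule: colour_cases) (use assms(2) in \<open>auto simp: BigI_eq SmallI_eq\<close>)

lemma recolouring_edge:
  assumes "2 \<le> k" "k \<le> r" "w \<in> V" "\<sigma> w \<in> SmallI r n (k - 1)" "c w = k"
  obtains f where "f \<in> E" "w \<in> f" "\<forall>u\<in>f - {w}. c u = k - 1 \<and> \<sigma> u < \<sigma> w"
proof -
  have k: "k - 1 \<in> {1..<r}"
    using assms by auto
  have "blocked_colour r n E \<sigma> c w (k - 1)"
    using alg1_output_SmallI[OF alg1 assms(3) k assms(4)] assms(1,5) by (auto split: if_splits)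
  then obtain f where f: "f \<in> E" "w \<in> f"
    and prev: "\<forall>u\<in>f - {w}. already_colored r n \<sigma> w u \<and> c u = k - 1"
    unfolding blocked_colour_def by blast
  have "\<sigma> u < \<sigma> w" if u: "u \<in> f - {w}" for u
  proof -
    have "already_colored r n \<sigma> w u" "c u = k - 1"
      using prev u by auto
    from this(1) show ?thesis
      unfolding already_colored_def
    proof (elim disjE conjE bexE)
      fix j
      assume "j \<in> {1..r}" "\<sigma> u \<in> BigI r n j"
      moreover from this have "j = k - 1"
        using alg1_output_BigI[OF alg1 edge_in_V[OF f(1)]] u \<open>c u = k - 1\<close> by auto
      ultimately show ?thesis
        using BigI_less_SmallI[of "\<sigma> u" j "\<sigma> w" "k - 1"] assms(4) by simp
    qed
  qed
  then show ?thesis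
    using that f prev by blast
qed

lemma recolouring_path_exists:
  assumes "2 \<le> k" "k \<le> r" "w \<in> V" "\<sigma> w \<in> SmallI r n (k - 1)" "c w = k"
  shows "\<exists>l F W. 1 \<le> l \<and> l < k \<and> W 1 = w \<and> recolouring_path r n E \<sigma> k l F W"
  using assms
proof (induction k arbitrary: w rule: less_induct)
  case (less k)
  obtain f where f: "f \<in> E" "w \<in> f" and prev: "\<forall>u\<in>f - {w}. c u = k - 1 \<and> \<sigma> u < \<sigma> w"
    using recolouring_edge[OF less.prems] .
  have above: "big_start r n (k - 1) \<le> \<sigma> u \<or> 2 \<le> k - 1 \<and> \<sigma> u \<in> SmallI r n (k - 1 - 1)"
    if "u \<in> f - {w}" for u
  proof -
    have "u \<in> V" "c u = k - 1"
      using edge_in_V[OF f(1)] prev that by auto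
    then show ?thesis
      by (rule colour_lower_bound)
  qed
  define S where "S = {u \<in> f - {w}. 2 \<le> k - 1 \<and> \<sigma> u \<in> SmallI r n (k - 1 - 1)}"
  show ?case
  proof (cases "S = {}")
    case True
    then have "recolouring_path r n E \<sigma> k 1 (\<lambda>_. f) (\<lambda>_. w)"
      using f less.prems(4) prev above unfolding recolouring_path_def S_def by auto
    then show ?thesis
      using less.prems(1) by fastforce
  next
    case False
    moreover have "finite S"
      using finite_edge[OF f(1)] unfolding S_def by simp
    ultimately obtain w' where "w' \<in> S" and w'_min: "\<forall>u\<in>S. \<sigma> w' \<le> \<sigma> u"
      using finite_arg_min_obtain by blast
    then have w': "w' \<in> f - {w}" "2 \<le> k - 1" "\<sigma> w' \<in> SmallI r n (k - 1 - 1)"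
      unfolding S_def by auto
    then have "w' \<in> V" "c w' = k - 1"
      using prev edge_in_V[OF f(1)] by auto
    moreover have "k - 1 < k" "k - 1 \<le> r"
      using less.prems by auto
    ultimately obtain l F W where l: "1 \<le> l" "l < k - 1" and "W 1 = w'"
      and path: "recolouring_path r n E \<sigma> (k - 1) l F W"
      using less.IH w'(2,3) by blast
    have between: "\<forall>u\<in>f - {w, W 1}. \<sigma> (W 1) < \<sigma> u \<and> \<sigma> u < \<sigma> w"
    proof
      fix u
      assume u: "u \<in> f - {w, W 1}"
      have "\<sigma> w' < \<sigma> u"
      proof (cases "u \<in> S")
        case True
        then have "\<sigma> w' \<le> \<sigma> u"
          using w'_min by blast
        moreover have "u \<in> V" "w' \<in> V" "w' \<noteq> u"
          using edge_in_V[OF f(1)] u w' \<open>W 1 = w'\<close> by auto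
        ultimately show ?thesis
          using weight_less_if_ne by blast
      next
        case False
        then have "big_start r n (k - 1) \<le> \<sigma> u"
          using above u unfolding S_def by auto
        moreover have "\<sigma> w' < big_start r n (k - 1)"
        proof -
          have "Suc (k - 1 - 1) = k - 1"
            using w'(2) by simp
          then show ?thesis
            using w'(3) by (simp add: SmallI_eq)
        qed
        ultimately show ?thesis
          by simp
      qed
      then show "\<sigma> (W 1) < \<sigma> u \<and> \<sigma> u < \<sigma> w"
        using prev u \<open>W 1 = w'\<close> by auto
    qed
    have "recolouring_path r n E \<sigma> k (Suc l)
      (\<lambda>j. if j = 1 then f else F (j - 1)) (\<lambda>j. if j = 1 then w else W (j - 1))"
    proof (rule recolouring_path_Cons[OF path l(1) f])
      show "W 1 \<in> f"
        using \<open>W 1 = w'\<close> w'(1) by simp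
    qed (use less.prems(4) between in auto)
    moreover have "1 \<le> Suc l" "Suc l < k"
      using l by auto
    ultimately show ?thesis
      by (intro exI[of _ "Suc l"] exI conjI) simp_all
  qed
qed

text \<open>The heaviest vertex of a colour-\<open>k\<close> edge in \<open>\<delta>\<^sub>k\<close> would have been recoloured \<open>k + 1\<close>.\<close>

lemma monochromatic_edge_avoids_SmallI:
  assumes e: "e \<in> E" "\<forall>u\<in>e. c u = k"
  shows "\<forall>u\<in>e. \<sigma> u \<notin> SmallI r n k"
proof (rule ccontr)
  define S where "S = {u \<in> e. \<sigma> u \<in> SmallI r n k}"
  assume "\<not> (\<forall>u\<in>e. \<sigma> u \<notin> SmallI r n k)"
  then have "S \<noteq> {}" "finite S"
    using finite_edge[OF e(1)] unfolding S_def by auto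
  then obtain v where "v \<in> S" and v_max: "\<forall>u\<in>S. \<sigma> u \<le> \<sigma> v"
    using finite_arg_max_obtain by blast
  then have v: "v \<in> e" "\<sigma> v \<in> SmallI r n k"
    unfolding S_def by auto
  have "v \<in> V" "c v = k"
    using v e edge_in_V by auto
  then have k: "k \<in> {1..<r}"
    by (cases rule: colour_cases) (use v BigI_SmallI_disjoint SmallI_unique in fastforce)+
  have "already_colored r n \<sigma> v u \<and> c u = k" if u: "u \<in> e - {v}" for u
  proof -
    have "u \<in> V" "c u = k"
      using u e edge_in_V by auto
    then have "already_colored r n \<sigma> v u"
    proof (cases rule: colour_cases)
      case 2
      then have "\<sigma> u \<le> \<sigma> v"
        using u v_max \<open>c u = k\<close> unfolding S_def by auto
      then have "\<sigma> u < \<sigma> v"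
        using weight_less_if_ne \<open>u \<in> V\<close> \<open>v \<in> V\<close> u by blast
      then show ?thesis
        using 2 unfolding already_colored_def by blast
    next
      case 3
      then have "\<sigma> u < \<sigma> v"
        using SmallI_less_SmallI[of "\<sigma> u" "k - 1" "\<sigma> v" k] v \<open>c u = k\<close> by auto
      then show ?thesis
        using 3 unfolding already_colored_def by blast
    qed (auto simp: already_colored_def)
    then show ?thesis
      using \<open>c u = k\<close> by blast
  qed
  then have "blocked_colour r n E \<sigma> c v k"
    unfolding blocked_colour_def using e(1) v(1) by blast
  then have "c v = k + 1"
    using alg1_output_SmallI[OF alg1 \<open>v \<in> V\<close> k v(2)] by simp
  then show False
    using \<open>c v = k\<close> by simp
qed

lemma monochromatic_edge_cases:
  assumes e: "e \<in> E" "e \<noteq> {}" "\<forall>u\<in>e. c u = k"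
  shows "(\<exists>i\<in>{1..r}. \<forall>u\<in>e. \<sigma> u \<in> BigI r n i) \<or>
    (\<exists>l es W. 2 \<le> k \<and> k \<le> r \<and> 1 \<le> l \<and> l < k \<and> recolouring_chain r n E \<sigma> k l es W)"
proof -
  have colours: "k \<in> {1..r} \<and> \<sigma> u \<in> BigI r n k \<or> 2 \<le> k \<and> k - 1 < r \<and> \<sigma> u \<in> SmallI r n (k - 1)"
    if "u \<in> e" for u
  proof -
    have "u \<in> V" "c u = k"
      using that e edge_in_V by auto
    then show ?thesis
      using monochromatic_edge_avoids_SmallI[OF e(1,3)] that by (cases rule: colour_cases) auto
  qed
  define S where "S = {u \<in> e. 2 \<le> k \<and> k - 1 < r \<and> \<sigma> u \<in> SmallI r n (k - 1)}"
  show ?thesis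
  proof (cases "S = {}")
    case True
    then have "\<forall>u\<in>e. \<sigma> u \<in> BigI r n k" "k \<in> {1..r}"
      using colours e unfolding S_def by auto
    then show ?thesis
      by blast
  next
    case False
    moreover have "finite S"
      using finite_edge[OF e(1)] unfolding S_def by simp
    ultimately obtain w where "w \<in> S" and w_min: "\<forall>u\<in>S. \<sigma> w \<le> \<sigma> u"
      using finite_arg_min_obtain by blast
    have w: "w \<in> e" "2 \<le> k" "k \<le> r" "\<sigma> w \<in> SmallI r n (k - 1)"
      using \<open>w \<in> S\<close> unfolding S_def by auto
    then have "w \<in> V" "c w = k"
      using e edge_in_V by auto
    then obtain l F W where l: "1 \<le> l" "l < k" and "W 1 = w"
      and path: "recolouring_path r n E \<sigma> k l F W"
      using recolouring_path_exists w by blast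
    have lightest: "\<sigma> w < \<sigma> u \<and> \<sigma> u < small_start r n k" if u: "u \<in> e - {w}" for u
    proof -
      from u have "u \<in> e"
        by simp
      from colours[OF this] show ?thesis
      proof (elim disjE conjE)
        assume "\<sigma> u \<in> BigI r n k"
        then show ?thesis
          using SmallI_less_BigI[of "\<sigma> w" "k - 1" "\<sigma> u" k] w by (simp add: BigI_eq)
      next
        assume "2 \<le> k" "k - 1 < r" "\<sigma> u \<in> SmallI r n (k - 1)"
        then have "\<sigma> w \<le> \<sigma> u" "\<sigma> u < big_start r n k"
          using u w_min w(2) unfolding S_def by (auto simp: SmallI_eq)
        moreover have "u \<in> V"
          using u e edge_in_V by auto
        ultimately show ?thesis
          using weight_less_if_ne[of w u] \<open>w \<in> V\<close> u small_start_bounds(1)[of k] by auto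
      qed
    qed
    define es where "es = (\<lambda>j. if j = 0 then e else F j)"
    have "recolouring_chain r n E \<sigma> k l es W"
      using e(1) w(1) \<open>W 1 = w\<close> lightest path l(1)
      unfolding recolouring_chain_def recolouring_path_def es_def by auto
    then show ?thesis
      using w l by blast
  qed
qed

end

section \<open>Chains lie in boxes\<close>

definition link_vertex :: "(nat \<Rightarrow> 'a set) \<Rightarrow> nat \<Rightarrow> 'a" where
  "link_vertex es j = the_elem (es (j - 1) \<inter> es j)"

definition inner_vertices :: "nat \<Rightarrow> (nat \<Rightarrow> 'a set) \<Rightarrow> nat \<Rightarrow> 'a set" where
  "inner_vertices l es j = es j - link_vertex es ` ({j, Suc j} \<inter> {1..l})"

text \<open>Unlike a recolouring chain, this condition does not depend on the weights, so the union
  bound can range over a fixed family of edge sequences; it makes the box of a chain a product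
  set.\<close>

definition simple_chain :: "'a set set \<Rightarrow> nat \<Rightarrow> (nat \<Rightarrow> 'a set) \<Rightarrow> bool" where
  "simple_chain E l es \<longleftrightarrow>
     (\<forall>j\<in>{0..l}. es j \<in> E) \<and> (\<forall>j\<in>{1..l}. is_singleton (es (j - 1) \<inter> es j)) \<and>
     inj_on (link_vertex es) {1..l} \<and> disjoint_family_on (inner_vertices l es) {0..l} \<and>
     (\<forall>j\<in>{0..l}. inner_vertices l es j \<inter> link_vertex es ` {1..l} = {})"

lemma recolouring_chain_edges:
  "recolouring_chain r n E \<sigma> k l es W \<Longrightarrow> j \<in> {0..l} \<Longrightarrow> es j \<in> E"
  unfolding recolouring_chain_def recolouring_path_def by (cases j) auto

lemma recolouring_chain_links:
  assumes "recolouring_chain r n E \<sigma> k l es W" "j \<in> {1..l}"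
  shows "W j \<in> es (j - 1)" "W j \<in> es j" "\<sigma> (W j) \<in> SmallI r n (k - j)"
proof -
  have "W (Suc j') \<in> es j'" if "j = Suc j'" for j'
    using assms that unfolding recolouring_chain_def recolouring_path_def by (cases j') auto
  then show "W j \<in> es (j - 1)"
    using assms(2) by (cases j) auto
  show "W j \<in> es j" "\<sigma> (W j) \<in> SmallI r n (k - j)"
    using assms unfolding recolouring_chain_def recolouring_path_def by auto
qed

context alg1_intervals
begin

context
  fixes E :: "'a set set" and \<sigma> :: "'a \<Rightarrow> real" and k l :: nat and es :: "nat \<Rightarrow> 'a set" and W
  assumes chain: "recolouring_chain r n E \<sigma> k l es W" and l_less_k: "l < k"
begin

lemma recolouring_chain_link_less:
  assumes "i \<in> {1..l}" "j \<in> {1..l}" "i < j"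
  shows "\<sigma> (W j) < \<sigma> (W i)"
  using SmallI_less_SmallI[of "\<sigma> (W j)" "k - j" "\<sigma> (W i)" "k - i"]
    recolouring_chain_links(3)[OF chain] assms l_less_k
  by auto

lemma recolouring_chain_below_link:
  assumes "j \<in> {1..l}" "u \<in> es j" "u \<noteq> W j"
  shows "\<sigma> u < \<sigma> (W j)"
proof (cases "j < l")
  case True
  then show ?thesis
    using chain assms recolouring_chain_link_less[of j "Suc j"]
    unfolding recolouring_chain_def recolouring_path_def by (cases "u = W (Suc j)") auto
next
  case False
  then show ?thesis
    using chain assms unfolding recolouring_chain_def recolouring_path_def by auto
qed

lemma recolouring_chain_above_next_link:
  assumes "j < l" "u \<in> es j" "u \<noteq> W (Suc j)" "j \<noteq> 0 \<Longrightarrow> u \<noteq> W j"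
  shows "\<sigma> (W (Suc j)) < \<sigma> u"
  using chain assms unfolding recolouring_chain_def recolouring_path_def by (cases j) auto

lemma recolouring_chain_meet:
  assumes j: "j \<in> {1..l}"
  shows "es (j - 1) \<inter> es j = {W j}"
proof (intro equalityI subsetI)
  fix x
  assume x: "x \<in> es (j - 1) \<inter> es j"
  show "x \<in> {W j}"
  proof (rule ccontr)
    assume "x \<notin> {W j}"
    then have "\<sigma> x < \<sigma> (W j)"
      using recolouring_chain_below_link j x by auto
    moreover have "\<sigma> (W j) < \<sigma> x"
    proof (cases "j - 1 \<noteq> 0 \<and> x = W (j - 1)")
      case True
      moreover have "j - 1 \<in> {1..l}" "j - 1 < j"
        using True j by auto
      ultimately show ?thesis
        using recolouring_chain_link_less[of "j - 1" j] j by auto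
    next
      case False
      then show ?thesis
        using recolouring_chain_above_next_link[of "j - 1" x] j x \<open>x \<notin> {W j}\<close> by auto
    qed
    ultimately show False
      by simp
  qed
qed (use recolouring_chain_links[OF chain j] in auto)

lemma recolouring_chain_link_vertex: "j \<in> {1..l} \<Longrightarrow> link_vertex es j = W j"
  unfolding link_vertex_def by (subst recolouring_chain_meet) simp_all

lemma recolouring_chain_inner_vertices:
  "inner_vertices l es j = es j - W ` ({j, Suc j} \<inter> {1..l})"
proof -
  have "link_vertex es ` ({j, Suc j} \<inter> {1..l}) = W ` ({j, Suc j} \<inter> {1..l})"
    using recolouring_chain_link_vertex by (intro image_cong) auto
  then show ?thesis
    unfolding inner_vertices_def by simp
qed

lemma recolouring_chain_inner_above:
  assumes "j < l" "u \<in> inner_vertices l es j"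
  shows "\<sigma> (W (Suc j)) < \<sigma> u"
proof (rule recolouring_chain_above_next_link)
  show "u \<in> es j" "u \<noteq> W (Suc j)" "j \<noteq> 0 \<Longrightarrow> u \<noteq> W j"
    using assms unfolding recolouring_chain_inner_vertices by auto
qed (rule assms(1))

lemma recolouring_chain_inner_below:
  "j \<in> {1..l} \<Longrightarrow> u \<in> inner_vertices l es j \<Longrightarrow> \<sigma> u < \<sigma> (W j)"
  using recolouring_chain_below_link unfolding recolouring_chain_inner_vertices by auto

lemma recolouring_chain_inj_on_links: "inj_on (link_vertex es) {1..l}"
proof (rule inj_onI)
  fix i j
  assume "i \<in> {1..l}" "j \<in> {1..l}" "link_vertex es i = link_vertex es j"
  then show "i = j"
    using recolouring_chain_link_less[of i j] recolouring_chain_link_less[of j i]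
    by (cases i j rule: linorder_cases) (auto simp: recolouring_chain_link_vertex)
qed

lemma recolouring_chain_inner_disjoint: "disjoint_family_on (inner_vertices l es) {0..l}"
proof -
  have "inner_vertices l es i \<inter> inner_vertices l es j = {}"
    if "i \<in> {0..l}" "j \<in> {0..l}" "i < j" for i j
  proof -
    have "\<sigma> (W j) \<le> \<sigma> (W (Suc i))"
      using recolouring_chain_link_less[of "Suc i" j] that by (cases "Suc i = j") auto
    then show ?thesis
      using recolouring_chain_inner_above[of i] recolouring_chain_inner_below[of j] that
      by fastforce
  qed
  then show ?thesis
    unfolding disjoint_family_on_def by (metis inf_commute linorder_neqE_nat)
qed

lemma recolouring_chain_links_not_inner:
  assumes "j \<in> {0..l}"
  shows "inner_vertices l es j \<inter> link_vertex es ` {1..l} = {}"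
proof -
  have "W i \<notin> inner_vertices l es j" if i: "i \<in> {1..l}" for i
  proof
    assume inner: "W i \<in> inner_vertices l es j"
    then have "i \<noteq> j" "i \<noteq> Suc j"
      using i unfolding recolouring_chain_inner_vertices by auto
    then consider "i < j" | "Suc j < i"
      by linarith
    then show False
    proof cases
      case 1
      then show False
        using recolouring_chain_link_less[of i j] recolouring_chain_inner_below[OF _ inner] i assms
        by fastforce
    next
      case 2
      then show False
        using recolouring_chain_link_less[of "Suc j" i] recolouring_chain_inner_above[OF _ inner] i
        by fastforce
    qed
  qed
  then show ?thesis
    using recolouring_chain_link_vertex by auto
qed

lemma recolouring_chain_simple: "simple_chain E l es"
  unfolding simple_chain_def
  using recolouring_chain_edges[OF chain] recolouring_chain_meet recolouring_chain_inj_on_links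
    recolouring_chain_inner_disjoint recolouring_chain_links_not_inner
  by (simp add: is_singleton_def)

end

end

lemma floor_cell:
  fixes x x0 h :: real
  assumes "h > 0" "x0 \<le> x" "x < x0 + real m * h"
  defines "s \<equiv> nat \<lfloor>(x - x0) / h\<rfloor>"
  shows "s < m" "x0 + real s * h \<le> x" "x < x0 + (real s + 1) * h"
proof -
  have "0 \<le> (x - x0) / h" "(x - x0) / h < real m"
    using assms(1-3) by (simp_all add: field_simps)
  moreover have "real s = of_int \<lfloor>(x - x0) / h\<rfloor>"
    using \<open>0 \<le> (x - x0) / h\<close> unfolding s_def by simp
  ultimately have "real s \<le> (x - x0) / h" "(x - x0) / h < real s + 1" "real s < real m"
    by linarith+
  then show "s < m" "x0 + real s * h \<le> x" "x < x0 + (real s + 1) * h"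
    using assms(1) by (simp_all add: field_simps)
qed

text \<open>In the box of a chain, the link vertex \<open>W j\<close> (index \<open>Inl j\<close>) lies in the \<open>ss j\<close>-th of
  the \<open>m\<close> cells of \<open>\<delta>\<^sub>k\<^sub>-\<^sub>j\<close>, and the inner vertices of edge \<open>j\<close> (index \<open>Inr j\<close>) lie
  between the cells of \<open>W (j + 1)\<close> and \<open>W j\<close>; the missing ends are \<open>\<Delta>\<^sub>k\<close> for edge \<open>0\<close>
  and \<open>\<Delta>\<^sub>k\<^sub>-\<^sub>l\<close> for edge \<open>l\<close>.\<close>

definition box_index :: "nat \<Rightarrow> (nat + nat) set" where
  "box_index l = Inl ` {1..l} \<union> Inr ` {0..l}"

definition box_group :: "nat \<Rightarrow> (nat \<Rightarrow> 'a set) \<Rightarrow> nat + nat \<Rightarrow> 'a set" where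
  "box_group l es t = (case t of Inl j \<Rightarrow> {link_vertex es j} | Inr j \<Rightarrow> inner_vertices l es j)"

lemma Inl_in_box_index [simp]: "Inl j \<in> box_index l \<longleftrightarrow> j \<in> {1..l}"
  by (auto simp: box_index_def)

lemma Inr_in_box_index [simp]: "Inr j \<in> box_index l \<longleftrightarrow> j \<in> {0..l}"
  by (auto simp: box_index_def)

context alg1_intervals
begin

definition cell_width :: "nat \<Rightarrow> real" where
  "cell_width m = b / real m"

definition cell :: "nat \<Rightarrow> nat \<Rightarrow> nat \<Rightarrow> real set" where
  "cell m i s = {small_start r n i + real s * cell_width m ..< small_start r n i + (real s + 1) * cell_width m}"

definition inner_lo :: "nat \<Rightarrow> nat \<Rightarrow> nat \<Rightarrow> (nat \<Rightarrow> nat) \<Rightarrow> nat \<Rightarrow> real" where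
  "inner_lo m k l ss j =
     (if j < l then small_start r n (k - Suc j) + real (ss (Suc j)) * cell_width m
      else big_start r n (k - l))"

definition inner_hi :: "nat \<Rightarrow> nat \<Rightarrow> (nat \<Rightarrow> nat) \<Rightarrow> nat \<Rightarrow> real" where
  "inner_hi m k ss j =
     (if j = 0 then small_start r n k
      else small_start r n (k - j) + (real (ss j) + 1) * cell_width m)"

definition box_interval :: "nat \<Rightarrow> nat \<Rightarrow> nat \<Rightarrow> (nat \<Rightarrow> nat) \<Rightarrow> nat + nat \<Rightarrow> real set" where
  "box_interval m k l ss t = (case t of
     Inl j \<Rightarrow> cell m (k - j) (ss j)
   | Inr j \<Rightarrow> {inner_lo m k l ss j ..< inner_hi m k ss j})"

definition chain_box ::
    "'a set \<Rightarrow> nat \<Rightarrow> nat \<Rightarrow> nat \<Rightarrow> (nat \<Rightarrow> 'a set) \<Rightarrow> (nat \<Rightarrow> nat) \<Rightarrow> ('a \<Rightarrow> real) set" where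
  "chain_box V m k l es ss = {\<sigma> \<in> space (weight_space V).
     \<forall>t\<in>box_index l. \<forall>u\<in>box_group l es t. \<sigma> u \<in> box_interval m k l ss t}"

lemma cell_width_pos: "m \<ge> 1 \<Longrightarrow> cell_width m > 0"
  unfolding cell_width_def using small_width_pos by simp

lemma SmallI_cell:
  assumes "m \<ge> 1" "x \<in> SmallI r n i"
  defines "s \<equiv> nat \<lfloor>(x - small_start r n i) / cell_width m\<rfloor>"
  shows "s < m \<and> x \<in> cell m i s"
proof -
  have "real m * cell_width m = b"
    using assms(1) by (simp add: cell_width_def)
  then have "small_start r n i \<le> x" "x < small_start r n i + real m * cell_width m"
    using assms(2) by (simp_all add: SmallI_eq big_start_Suc)
  from floor_cell[OF cell_width_pos[OF assms(1)] this] show ?thesis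
    unfolding s_def cell_def by simp
qed

lemma chain_in_box:
  assumes chain: "recolouring_chain r n E \<sigma> k l es W" and l: "1 \<le> l" "l < k"
    and m: "m \<ge> 1" and \<sigma>: "\<sigma> \<in> space (weight_space V)"
  shows "\<exists>ss\<in>PiE {1..l} (\<lambda>_. {..<m}). \<sigma> \<in> chain_box V m k l es ss"
proof -
  define ss where
    "ss = (\<lambda>j\<in>{1..l}. nat \<lfloor>(\<sigma> (W j) - small_start r n (k - j)) / cell_width m\<rfloor>)"
  have link: "ss j < m \<and> \<sigma> (W j) \<in> cell m (k - j) (ss j)" if "j \<in> {1..l}" for j
    using SmallI_cell[OF m recolouring_chain_links(3)[OF chain that]] that unfolding ss_def by simp
  have "ss \<in> PiE {1..l} (\<lambda>_. {..<m})"
    using link unfolding ss_def by auto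
  moreover have "\<sigma> u \<in> box_interval m k l ss t" if t: "t \<in> box_index l" and u: "u \<in> box_group l es t" for t u
  proof (cases t)
    case (Inl j)
    then have "j \<in> {1..l}"
      using t unfolding box_index_def by auto
    then show ?thesis
      using link u Inl recolouring_chain_link_vertex[OF chain l(2)]
      unfolding box_group_def box_interval_def by auto
  next
    case (Inr j)
    then have j: "j \<in> {0..l}" and inner: "u \<in> inner_vertices l es j"
      using t u unfolding box_index_def box_group_def by auto
    have "inner_lo m k l ss j \<le> \<sigma> u"
    proof (cases "j < l")
      case True
      then show ?thesis
        using recolouring_chain_inner_above[OF chain l(2) True inner] link[of "Suc j"]
        unfolding inner_lo_def cell_def by auto
    next
      case False
      then show ?thesis
        using chain inner j l(1)
        unfolding inner_lo_def recolouring_chain_def recolouring_path_def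
          recolouring_chain_inner_vertices[OF chain l(2)] by auto
    qed
    moreover have "\<sigma> u < inner_hi m k ss j"
    proof (cases "j = 0")
      case True
      then show ?thesis
        using chain inner l(1)
        unfolding inner_hi_def recolouring_chain_def
          recolouring_chain_inner_vertices[OF chain l(2)] by auto
    next
      case False
      then show ?thesis
        using recolouring_chain_inner_below[OF chain l(2) _ inner] link[of j] j
        unfolding inner_hi_def cell_def by auto
    qed
    ultimately show ?thesis
      using Inr unfolding box_interval_def by simp
  qed
  ultimately show ?thesis
    using \<sigma> unfolding chain_box_def by blast
qed

end

section \<open>Measure of boxes\<close>

lemma measure_PiM_grouped_box:
  fixes G :: "'k \<Rightarrow> 'a set" and Y :: "'k \<Rightarrow> 'b set"
  assumes M: "prob_space M" and V: "finite V" and K: "finite K"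
    and G: "\<forall>t\<in>K. G t \<subseteq> V" "disjoint_family_on G K" and Y: "\<forall>t\<in>K. Y t \<in> sets M"
  defines "B \<equiv> {\<sigma> \<in> space (PiM V (\<lambda>_. M)). \<forall>t\<in>K. \<forall>u\<in>G t. \<sigma> u \<in> Y t}"
  shows "B \<in> sets (PiM V (\<lambda>_. M))"
    and "measure (PiM V (\<lambda>_. M)) B = (\<Prod>t\<in>K. measure M (Y t) ^ card (G t))"
proof -
  interpret M: prob_space M
    by (rule M)
  define J where "J = \<Union>(G ` K)"
  define group where "group u = (THE t. t \<in> K \<and> u \<in> G t)" for u
  have group: "group u = t" if "t \<in> K" "u \<in> G t" for t u
    unfolding group_def using that G(2) by (auto simp: disjoint_family_on_def)
  have J: "J \<subseteq> V" "finite J"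
    using G(1) V finite_subset[of J V] unfolding J_def by auto
  have Y_group: "Y (group u) \<in> sets M" if "u \<in> J" for u
    using that Y group unfolding J_def by auto
  have B_emb: "B = prod_emb V (\<lambda>_. M) J (PiE J (\<lambda>u. Y (group u)))"
    unfolding B_def J_def using group by (fastforce simp: prod_emb_iff space_PiM PiE_def Pi_iff)
  show "B \<in> sets (PiM V (\<lambda>_. M))"
    unfolding B_emb using J Y_group by (intro sets_PiM_I) auto
  have "emeasure (PiM V (\<lambda>_. M)) B = (\<Prod>u\<in>J. emeasure M (Y (group u)))"
    unfolding B_emb using J Y_group M by (intro emeasure_PiM_emb) auto
  also have "\<dots> = ennreal (\<Prod>u\<in>J. measure M (Y (group u)))"
    by (simp add: M.emeasure_eq_measure prod_ennreal)
  finally have "measure (PiM V (\<lambda>_. M)) B = (\<Prod>u\<in>J. measure M (Y (group u)))"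
    by (simp add: measure_def prod_nonneg)
  also have "\<dots> = (\<Prod>t\<in>K. \<Prod>u\<in>G t. measure M (Y (group u)))"
    unfolding J_def using K G V by (intro prod.UNION_disjoint) (auto simp: disjoint_family_on_def intro: finite_subset)
  also have "\<dots> = (\<Prod>t\<in>K. measure M (Y t) ^ card (G t))"
    using group by (intro prod.cong refl) simp
  finally show "measure (PiM V (\<lambda>_. M)) B = (\<Prod>t\<in>K. measure M (Y t) ^ card (G t))" .
qed

abbreviation uniform01 :: "real measure" where
  "uniform01 \<equiv> uniform_measure lborel {0..<1}"

lemma prob_space_uniform01: "prob_space uniform01"
  by (rule prob_space_uniform_measure) simp_all

lemma prob_space_weight_space: "prob_space (weight_space V)"
  unfolding weight_space_def by (rule prob_space_PiM) (rule prob_space_uniform01)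

lemma measure_uniform01_le_1: "measure uniform01 A \<le> 1"
  using prob_space.prob_le_1[OF prob_space_uniform01] .

lemma measure_uniform01_atLeastLessThan:
  assumes "x \<le> y"
  shows "measure uniform01 {x..<y} \<le> y - x"
proof -
  have "measure uniform01 {x..<y} = measure lborel ({0..<1} \<inter> {x..<y})"
    by (simp add: measure_uniform_measure)
  also have "\<dots> \<le> measure lborel {x..<y}"
    by (rule measure_mono_fmeasurable) (use assms in \<open>auto simp: fmeasurable_def\<close>)
  finally show ?thesis
    using assms by simp
qed

lemma weight_space_grouped_box:
  fixes G :: "'k \<Rightarrow> 'a set"
  assumes "finite V" "finite K" "\<forall>t\<in>K. G t \<subseteq> V" "disjoint_family_on G K" "\<forall>t\<in>K. Y t \<in> sets borel"
  defines "B \<equiv> {\<sigma> \<in> space (weight_space V). \<forall>t\<in>K. \<forall>u\<in>G t. \<sigma> u \<in> Y t}"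
  shows "B \<in> sets (weight_space V)"
    and "measure (weight_space V) B = (\<Prod>t\<in>K. measure uniform01 (Y t) ^ card (G t))"
  using measure_PiM_grouped_box[OF prob_space_uniform01 assms(1-4)] assms(5)
  unfolding B_def weight_space_def by simp_all

lemma power_add_le_exp:
  fixes A x :: real
  assumes "A > 0" "x \<ge> 0" "N \<le> n"
  shows "(A + x) ^ N \<le> A ^ N * exp (real n * x / A)"
proof -
  have "(A + x) ^ N = A ^ N * (1 + x / A) ^ N"
    using assms(1) by (simp add: power_mult_distrib[symmetric] field_simps)
  also have "(1 + x / A) ^ N \<le> exp (x / A) ^ N"
    using assms(1,2) by (intro power_mono) (simp_all add: exp_ge_add_one_self)
  also have "\<dots> = exp (real N * x / A)"
    by (simp add: exp_of_nat_mult[symmetric])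
  also have "\<dots> \<le> exp (real n * x / A)"
    using assms by (intro exp_mono) (simp add: divide_right_mono mult_right_mono)
  finally show ?thesis
    using assms(1) by (simp add: mult_left_mono)
qed

lemma sum_card_link_indices: "(\<Sum>j\<in>{0..l}. card ({j, Suc j} \<inter> {1..l})) = 2 * l"
proof (induction l)
  case (Suc l)
  have "{j, Suc j} \<inter> {1..Suc l} = {j, Suc j} \<inter> {1..l}" if "j < l" for j
    using that by auto
  then have "(\<Sum>j\<in>{0..<l}. card ({j, Suc j} \<inter> {1..Suc l})) = (\<Sum>j\<in>{0..<l}. card ({j, Suc j} \<inter> {1..l}))"
    by (intro sum.cong) auto
  moreover have "(\<Sum>j\<in>{0..l}. card ({j, Suc j} \<inter> {1..l})) =
      (\<Sum>j\<in>{0..<l}. card ({j, Suc j} \<inter> {1..l})) + card ({l, Suc l} \<inter> {1..l})"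
    by (simp add: atLeastLessThanSuc_atLeastAtMost[symmetric])
  moreover have "card ({l, Suc l} \<inter> {1..l}) = (if l = 0 then 0 else 1)"
    by (cases "l = 0") (auto simp: Int_insert_left)
  moreover have "card ({l, Suc l} \<inter> {1..Suc l}) = (if l = 0 then 1 else 2)"
    by (cases "l = 0") (auto simp: Int_insert_left)
  moreover have "card ({Suc l, Suc (Suc l)} \<inter> {1..Suc l}) = 1"
    by (simp add: Int_insert_left)
  ultimately show ?case
    using Suc.IH by (simp add: atLeastLessThanSuc_atLeastAtMost[symmetric] split: if_splits)
qed simp

lemma measure_uniform01_power_le:
  fixes A :: real
  assumes "A > 0" "A \<le> y - x" "N \<le> card D" "N \<le> n"
  shows "measure uniform01 {x..<y} ^ card D \<le> A ^ N * exp (real n * (y - x - A) / A)"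
proof -
  have "measure uniform01 {x..<y} ^ card D \<le> measure uniform01 {x..<y} ^ N"
    using assms(3) measure_nonneg measure_uniform01_le_1 by (rule power_decreasing)
  also have "\<dots> \<le> (A + (y - x - A)) ^ N"
    using measure_uniform01_atLeastLessThan[of x y] assms(1,2) by (intro power_mono) simp_all
  also have "\<dots> \<le> A ^ N * exp (real n * (y - x - A) / A)"
    using assms(1,2,4) by (intro power_add_le_exp) simp_all
  finally show ?thesis .
qed

locale alg1_hypergraph = alg1_intervals +
  fixes V :: "'a set" and E :: "'a set set"
  assumes finite_V: "finite V" and uniform_edges: "\<forall>e\<in>E. e \<subseteq> V \<and> card e = n"
    and two_le_n: "2 \<le> n"
begin

lemma simple_chain_box_groups_subset:
  assumes "simple_chain E l es"
  shows "\<forall>t\<in>box_index l. box_group l es t \<subseteq> V"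
proof -
  have edges: "es j \<subseteq> V" if "j \<in> {0..l}" for j
  proof -
    have "es j \<in> E"
      using assms that unfolding simple_chain_def by simp
    then show ?thesis
      using uniform_edges by simp
  qed
  have "link_vertex es j \<in> es j" if "j \<in> {1..l}" for j
  proof -
    have "es (j - 1) \<inter> es j = {link_vertex es j}"
      using assms that unfolding simple_chain_def link_vertex_def is_singleton_the_elem by simp
    then show ?thesis
      by auto
  qed
  then show ?thesis
    using edges unfolding box_index_def box_group_def inner_vertices_def by fastforce
qed

lemma simple_chain_box_groups_disjoint:
  assumes "simple_chain E l es"
  shows "disjoint_family_on (box_group l es) (box_index l)"
proof -
  have inj: "inj_on (link_vertex es) {1..l}"
    and inner: "disjoint_family_on (inner_vertices l es) {0..l}"
    and apart: "\<forall>j\<in>{0..l}. inner_vertices l es j \<inter> link_vertex es ` {1..l} = {}"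
    using assms unfolding simple_chain_def by auto
  show ?thesis
    unfolding disjoint_family_on_def
  proof (intro ballI impI)
    fix s t
    assume st: "s \<in> box_index l" "t \<in> box_index l" "s \<noteq> t"
    show "box_group l es s \<inter> box_group l es t = {}"
    proof (cases s; cases t)
      fix i j
      assume "s = Inl i" "t = Inl j"
      moreover from this have "i \<in> {1..l}" "j \<in> {1..l}" "i \<noteq> j"
        using st by simp_all
      then have "link_vertex es i \<noteq> link_vertex es j"
        using inj by (simp add: inj_on_eq_iff)
      ultimately show ?thesis
        by (simp add: box_group_def)
    next
      fix i j
      assume "s = Inl i" "t = Inr j"
      moreover from this have "inner_vertices l es j \<inter> link_vertex es ` {1..l} = {}"
        "link_vertex es i \<in> link_vertex es ` {1..l}"
        using st apart by simp_all
      then have "link_vertex es i \<notin> inner_vertices l es j"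
        by blast
      ultimately show ?thesis
        by (simp add: box_group_def)
    next
      fix i j
      assume "s = Inr i" "t = Inl j"
      moreover from this have "inner_vertices l es i \<inter> link_vertex es ` {1..l} = {}"
        "link_vertex es j \<in> link_vertex es ` {1..l}"
        using st apart by simp_all
      then have "link_vertex es j \<notin> inner_vertices l es i"
        by blast
      ultimately show ?thesis
        by (simp add: box_group_def)
    next
      fix i j
      assume "s = Inr i" "t = Inr j"
      moreover from this have "inner_vertices l es i \<inter> inner_vertices l es j = {}"
        using st inner by (simp add: disjoint_family_onD)
      ultimately show ?thesis
        by (simp add: box_group_def)
    qed
  qed
qed

lemma chain_box_measure:
  assumes "simple_chain E l es"
  shows "chain_box V m k l es ss \<in> sets (weight_space V)"
    and "measure (weight_space V) (chain_box V m k l es ss) =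
      (\<Prod>j\<in>{1..l}. measure uniform01 (cell m (k - j) (ss j))) *
      (\<Prod>j\<in>{0..l}. measure uniform01 {inner_lo m k l ss j ..< inner_hi m k ss j} ^
         card (inner_vertices l es j))"
proof -
  have "finite (box_index l)" "\<forall>t\<in>box_index l. box_interval m k l ss t \<in> sets borel"
    unfolding box_index_def box_interval_def cell_def by (auto split: sum.splits)
  note box = weight_space_grouped_box[OF finite_V this(1) simple_chain_box_groups_subset[OF assms]
      simple_chain_box_groups_disjoint[OF assms] this(2)]
  show "chain_box V m k l es ss \<in> sets (weight_space V)"
    using box(1) unfolding chain_box_def .
  have "measure (weight_space V) (chain_box V m k l es ss) =
    (\<Prod>t\<in>box_index l. measure uniform01 (box_interval m k l ss t) ^ card (box_group l es t))"
    using box(2) unfolding chain_box_def .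
  also have "\<dots> = (\<Prod>t\<in>Inl ` {1..l}. measure uniform01 (box_interval m k l ss t) ^ card (box_group l es t)) *
      (\<Prod>t\<in>Inr ` {0..l}. measure uniform01 (box_interval m k l ss t) ^ card (box_group l es t))"
    unfolding box_index_def by (rule prod.union_disjoint) auto
  also have "\<dots> = (\<Prod>j\<in>{1..l}. measure uniform01 (cell m (k - j) (ss j))) *
      (\<Prod>j\<in>{0..l}. measure uniform01 {inner_lo m k l ss j ..< inner_hi m k ss j} ^
         card (inner_vertices l es j))"
    by (simp add: prod.reindex box_interval_def box_group_def)
  finally show "measure (weight_space V) (chain_box V m k l es ss) = \<dots>" .
qed

lemma card_inner_vertices:
  assumes "simple_chain E l es" "j \<in> {0..l}"
  shows "n - card ({j, Suc j} \<inter> {1..l}) \<le> card (inner_vertices l es j)"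
proof -
  have "es j \<in> E"
    using assms unfolding simple_chain_def by simp
  then have "card (es j) = n"
    using uniform_edges by simp
  moreover have "card (link_vertex es ` ({j, Suc j} \<inter> {1..l})) \<le> card ({j, Suc j} \<inter> {1..l})"
    by (rule card_image_le) simp
  moreover have "card (es j) - card (link_vertex es ` ({j, Suc j} \<inter> {1..l})) \<le> card (inner_vertices l es j)"
    unfolding inner_vertices_def by (rule diff_card_le_card_Diff) simp
  ultimately show ?thesis
    by linarith
qed

end

lemma sum_atLeastAtMost_ends:
  fixes g :: "nat \<Rightarrow> 'a::comm_monoid_add"
  assumes "1 \<le> l"
  shows "(\<Sum>j\<in>{0..l}. g j) = g 0 + (\<Sum>j\<in>{1..<l}. g j) + g l"
proof -
  have "(\<Sum>j\<in>{0..l}. g j) = g 0 + (\<Sum>j\<in>{Suc 0..l}. g j)"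
    by (rule sum.atLeast_Suc_atMost) simp
  also have "(\<Sum>j\<in>{Suc 0..l}. g j) = g l + (\<Sum>j\<in>{Suc 0..<l}. g j)"
    using assms by (intro sum.last_plus) simp
  finally show ?thesis
    by (simp add: ac_simps)
qed

context alg1_intervals
begin

lemma small_start_diff: "small_start r n i - small_start r n j = (real i - real j) * (a + b)"
  by (simp add: small_start_def big_start_def algebra_simps)

text \<open>Each inner interval is \<open>\<Delta>\<close>-long plus an excess, and the excesses add up to
  \<open>l (b + h)\<close> because consecutive intervals share the cell of their common link.\<close>

lemma inner_interval_lengths:
  assumes l: "1 \<le> l" "l < k" and m: "m \<ge> 1" and ss: "\<forall>j\<in>{1..l}. ss j < m"
  shows "\<forall>j\<in>{0..l}. a \<le> inner_hi m k ss j - inner_lo m k l ss j"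
    and "(\<Sum>j\<in>{0..l}. inner_hi m k ss j - inner_lo m k l ss j - a) = real l * (b + cell_width m)"
proof -
  define h where "h = cell_width m"
  define f where "f j = real (ss j) * h" for j
  define x where "x j = (if j = 0 then b - f 1 else if j < l then b + h + f j - f (Suc j) else h + f l)"
    for j
  have "h > 0" "real m * h = b"
    using m cell_width_pos unfolding h_def cell_width_def by simp_all
  have f: "0 \<le> f j" "f j \<le> b - h" if "j \<in> {1..l}" for j
  proof -
    have "ss j < m"
      using ss that by blast
    then have "ss j + 1 \<le> m"
      by simp
    then have "real (ss j) + 1 \<le> real m"
      by linarith
    then have "(real (ss j) + 1) * h \<le> real m * h"
      using \<open>h > 0\<close> by (intro mult_right_mono) auto
    then show "0 \<le> f j" "f j \<le> b - h"
      using \<open>h > 0\<close> \<open>real m * h = b\<close> unfolding f_def by (simp_all add: algebra_simps)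
  qed
  have length: "inner_hi m k ss j - inner_lo m k l ss j = a + x j" if "j \<in> {0..l}" for j
    using that l small_start_diff[of k "k - 1"] small_start_diff[of "k - j" "k - Suc j"]
    unfolding inner_hi_def inner_lo_def x_def f_def h_def
    by (auto simp: of_nat_diff small_start_def algebra_simps)
  have "0 \<le> x j" if "j \<in> {0..l}" for j
    using f[of 1] f[of j] f[of "Suc j"] f[of l] \<open>h > 0\<close> that l unfolding x_def by auto
  then show "\<forall>j\<in>{0..l}. a \<le> inner_hi m k ss j - inner_lo m k l ss j"
    using length by simp
  have "(\<Sum>j\<in>{1..<l}. x j) = (\<Sum>j\<in>{1..<l}. (b + h) - (f (Suc j) - f j))"
    unfolding x_def by (intro sum.cong) auto
  also have "\<dots> = (\<Sum>j\<in>{1..<l}. b + h) - (\<Sum>j\<in>{1..<l}. f (Suc j) - f j)"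
    by (rule sum_subtractf)
  also have "\<dots> = real (l - 1) * (b + h) - (f l - f 1)"
    using sum_Suc_diff'[of 1 l f] l by simp
  finally have "(\<Sum>j\<in>{0..l}. x j) = real l * (b + h)"
    using l unfolding sum_atLeastAtMost_ends[OF l(1), of x] by (simp add: x_def of_nat_diff algebra_simps)
  then show "(\<Sum>j\<in>{0..l}. inner_hi m k ss j - inner_lo m k l ss j - a) = real l * (b + cell_width m)"
    using length unfolding h_def by simp
qed

end

context alg1_hypergraph
begin

lemma sum_inner_sizes: "(\<Sum>j\<in>{0..l}. n - card ({j, Suc j} \<inter> {1..l})) = (l + 1) * n - 2 * l"
proof -
  have "card ({j, Suc j} \<inter> {1..l}) \<le> n" for j
  proof -
    have "card ({j, Suc j} \<inter> {1..l}) \<le> card {j, Suc j}"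
      by (rule card_mono) auto
    then show ?thesis
      using two_le_n by simp
  qed
  then have "(\<Sum>j\<in>{0..l}. n - card ({j, Suc j} \<inter> {1..l})) =
      (\<Sum>j\<in>{0..l}. n) - (\<Sum>j\<in>{0..l}. card ({j, Suc j} \<inter> {1..l}))"
    by (rule sum_subtractf_nat)
  then show ?thesis
    unfolding sum_card_link_indices by simp
qed

lemma measure_cell_le: "m \<ge> 1 \<Longrightarrow> measure uniform01 (cell m i s) \<le> cell_width m"
  using measure_uniform01_atLeastLessThan[of "small_start r n i + real s * cell_width m"
      "small_start r n i + (real s + 1) * cell_width m"] cell_width_pos[of m]
  unfolding cell_def by (simp add: algebra_simps)

lemma chain_box_bound:
  assumes simple: "simple_chain E l es" and l: "1 \<le> l" "l < k" and m: "m \<ge> 1"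
    and ss: "ss \<in> PiE {1..l} (\<lambda>_. {..<m})"
  shows "measure (weight_space V) (chain_box V m k l es ss) \<le>
    cell_width m ^ l * a ^ ((l + 1) * n - 2 * l) * exp (real n * (real l * (b + cell_width m)) / a)"
proof -
  let ?h = "cell_width m"
  define N where "N j = n - card ({j, Suc j} \<inter> {1..l})" for j
  define x where "x j = inner_hi m k ss j - inner_lo m k l ss j - a" for j
  have "\<forall>j\<in>{1..l}. ss j < m"
    using ss by auto
  note lengths = inner_interval_lengths[OF l m this]
  have "(\<Prod>j\<in>{1..l}. measure uniform01 (cell m (k - j) (ss j))) \<le> (\<Prod>j\<in>{1..l}. ?h)"
    using measure_cell_le[OF m] by (intro prod_mono) simp
  then have links: "(\<Prod>j\<in>{1..l}. measure uniform01 (cell m (k - j) (ss j))) \<le> ?h ^ l"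
    by simp
  have "(\<Prod>j\<in>{0..l}. measure uniform01 {inner_lo m k l ss j ..< inner_hi m k ss j} ^
        card (inner_vertices l es j)) \<le> (\<Prod>j\<in>{0..l}. a ^ N j * exp (real n * x j / a))"
  proof (rule prod_mono)
    fix j
    assume j: "j \<in> {0..l}"
    have "measure uniform01 {inner_lo m k l ss j ..< inner_hi m k ss j} ^ card (inner_vertices l es j)
        \<le> a ^ N j * exp (real n * x j / a)" (is "?lhs \<le> ?rhs")
      unfolding N_def x_def
      by (rule measure_uniform01_power_le[OF big_width_pos _ card_inner_vertices[OF simple j]])
        (use lengths(1) j in simp_all)
    then show "0 \<le> ?lhs \<and> ?lhs \<le> ?rhs"
      by simp
  qed
  also have "\<dots> = a ^ (\<Sum>j\<in>{0..l}. N j) * exp (real n * (\<Sum>j\<in>{0..l}. x j) / a)"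
    by (simp add: prod.distrib power_sum exp_sum[symmetric] sum_divide_distrib sum_distrib_left)
  also have "\<dots> = a ^ ((l + 1) * n - 2 * l) * exp (real n * (real l * (b + ?h)) / a)"
    using lengths(2) unfolding N_def x_def sum_inner_sizes by simp
  finally show ?thesis
    unfolding chain_box_measure(2)[OF simple] mult.assoc
    using links cell_width_pos[OF m] by (intro mult_mono) (simp_all add: prod_nonneg)
qed

end

section \<open>Measurability\<close>

lemma sets_saturated_finite:
  assumes "finite (f ` space M)" "\<And>x. x \<in> space M \<Longrightarrow> {y \<in> space M. f y = f x} \<in> sets M"
    and "A \<subseteq> space M" "\<And>x y. x \<in> A \<Longrightarrow> y \<in> space M \<Longrightarrow> f y = f x \<Longrightarrow> y \<in> A"
  shows "A \<in> sets M"
proof -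
  have "A = (\<Union>x\<in>A. {y \<in> space M. f y = f x})"
    using assms(3,4) by auto
  also have "\<dots> = (\<Union>s\<in>f ` A. {y \<in> space M. f y = s})"
    by auto
  also have "\<dots> \<in> sets M"
  proof (rule sets.finite_UN)
    show "finite (f ` A)"
      using assms(1,3) by (meson finite_subset image_mono)
  qed (use assms(2,3) in auto)
  finally show ?thesis .
qed

definition weight_pattern :: "nat \<Rightarrow> nat \<Rightarrow> 'a set \<Rightarrow> ('a \<Rightarrow> real) \<Rightarrow> ('a \<times> nat) set \<times> ('a \<times> nat) set \<times> ('a \<times> 'a) set"
  where
  "weight_pattern r n V \<sigma> =
     ({(v, i). v \<in> V \<and> i \<in> {1..r} \<and> \<sigma> v \<in> BigI r n i},
      {(v, i). v \<in> V \<and> i \<in> {1..<r} \<and> \<sigma> v \<in> SmallI r n i},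
      {(u, v). u \<in> V \<and> v \<in> V \<and> \<sigma> u < \<sigma> v})"

lemma weight_pattern_eq_iff:
  "weight_pattern r n V \<sigma> = weight_pattern r n V \<sigma>' \<longleftrightarrow>
    (\<forall>v\<in>V. \<forall>i\<in>{1..r}. \<sigma> v \<in> BigI r n i \<longleftrightarrow> \<sigma>' v \<in> BigI r n i) \<and>
    (\<forall>v\<in>V. \<forall>i\<in>{1..<r}. \<sigma> v \<in> SmallI r n i \<longleftrightarrow> \<sigma>' v \<in> SmallI r n i) \<and>
    (\<forall>u\<in>V. \<forall>v\<in>V. \<sigma> u < \<sigma> v \<longleftrightarrow> \<sigma>' u < \<sigma>' v)"
  (is "?same \<longleftrightarrow> ?big \<and> ?small \<and> ?order")
proof
  assume ?same
  then have big: "v \<in> V \<and> i \<in> {1..r} \<and> \<sigma> v \<in> BigI r n i \<longleftrightarrow> v \<in> V \<and> i \<in> {1..r} \<and> \<sigma>' v \<in> BigI r n i"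
    and small: "v \<in> V \<and> i \<in> {1..<r} \<and> \<sigma> v \<in> SmallI r n i \<longleftrightarrow>
      v \<in> V \<and> i \<in> {1..<r} \<and> \<sigma>' v \<in> SmallI r n i"
    and order: "u \<in> V \<and> v \<in> V \<and> \<sigma> u < \<sigma> v \<longleftrightarrow> u \<in> V \<and> v \<in> V \<and> \<sigma>' u < \<sigma>' v"
    for u v i
    unfolding weight_pattern_def by (simp_all add: set_eq_iff)
  show "?big \<and> ?small \<and> ?order"
  proof (intro conjI ballI)
    show "\<sigma> v \<in> BigI r n i \<longleftrightarrow> \<sigma>' v \<in> BigI r n i" if "v \<in> V" "i \<in> {1..r}" for v i
      using big[of v i] that by simp
    show "\<sigma> v \<in> SmallI r n i \<longleftrightarrow> \<sigma>' v \<in> SmallI r n i" if "v \<in> V" "i \<in> {1..<r}" for v i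
      using small[of v i] that by simp
    show "\<sigma> u < \<sigma> v \<longleftrightarrow> \<sigma>' u < \<sigma>' v" if "u \<in> V" "v \<in> V" for u v
      using order[of u v] that by simp
  qed
next
  assume "?big \<and> ?small \<and> ?order"
  then show ?same
    unfolding weight_pattern_def by (auto simp: set_eq_iff)
qed

lemma finite_weight_pattern: "finite V \<Longrightarrow> finite (range (weight_pattern r n V))"
  by (rule finite_subset[of _ "Pow (V \<times> {1..r}) \<times> Pow (V \<times> {1..<r}) \<times> Pow (V \<times> V)"])
    (auto simp: weight_pattern_def)

lemma weight_pattern_fibre_measurable:
  assumes "finite V"
  shows "{\<sigma> \<in> space (weight_space V). weight_pattern r n V \<sigma> = weight_pattern r n V \<sigma>0}
    \<in> sets (weight_space V)"
proof -
  have "BigI r n i \<in> sets borel" "SmallI r n i \<in> sets borel" for i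
    by (simp_all add: BigI_eq SmallI_eq)
  then have "Measurable.pred (weight_space V) (\<lambda>\<sigma>. weight_pattern r n V \<sigma> = weight_pattern r n V \<sigma>0)"
    unfolding weight_pattern_eq_iff weight_space_def using assms by measurable
  then show ?thesis
    by (simp add: pred_def)
qed

context
  fixes r n :: nat and V :: "'a set" and \<sigma> \<sigma>' :: "'a \<Rightarrow> real"
  assumes same: "weight_pattern r n V \<sigma> = weight_pattern r n V \<sigma>'"
begin

lemma already_colored_weight_pattern:
  assumes "u \<in> V" "v \<in> V"
  shows "already_colored r n \<sigma> v u \<longleftrightarrow> already_colored r n \<sigma>' v u"
  using same assms unfolding weight_pattern_eq_iff already_colored_def by auto

lemma alg1_output_weight_pattern:
  assumes "\<forall>e\<in>E. e \<subseteq> V"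
  shows "alg1_output r n V E \<sigma> c \<longleftrightarrow> alg1_output r n V E \<sigma>' c"
proof -
  have "blocked_colour r n E \<sigma> c v i \<longleftrightarrow> blocked_colour r n E \<sigma>' c v i" if "v \<in> V" for v i
    unfolding blocked_colour_def
  proof (rule bex_cong[OF refl], rule conj_cong[OF refl], rule ball_cong[OF refl])
    fix e u
    assume "e \<in> E" "v \<in> e" "u \<in> e - {v}"
    then have "u \<in> V"
      using assms by blast
    then show "already_colored r n \<sigma> v u \<and> c u = i \<longleftrightarrow> already_colored r n \<sigma>' v u \<and> c u = i"
      using already_colored_weight_pattern[OF _ that] by simp
  qed
  then show ?thesis
    using same unfolding alg1_output_iff weight_pattern_eq_iff by auto
qed

lemma inj_on_weight_pattern: "inj_on \<sigma> V \<longleftrightarrow> inj_on \<sigma>' V"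
proof -
  have "\<sigma> u = \<sigma> v \<longleftrightarrow> \<sigma>' u = \<sigma>' v" if "u \<in> V" "v \<in> V" for u v
    using same that unfolding weight_pattern_eq_iff by (metis less_irrefl linorder_neqE)
  then show ?thesis
    unfolding inj_on_def by blast
qed

end

lemma monochromatic_event_measurable:
  assumes "finite V" "\<forall>e\<in>E. e \<subseteq> V"
  shows "{\<sigma> \<in> space (weight_space V). inj_on \<sigma> V \<and> has_mono_edge E (C0 r n V E \<sigma>)}
    \<in> sets (weight_space V)"
proof (rule sets_saturated_finite[where f = "weight_pattern r n V"])
  show "finite (weight_pattern r n V ` space (weight_space V))"
    using finite_weight_pattern[OF assms(1)] by (rule finite_subset[rotated]) auto
  show "{\<sigma>' \<in> space (weight_space V). weight_pattern r n V \<sigma>' = weight_pattern r n V \<sigma>}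
    \<in> sets (weight_space V)" for \<sigma>
    using assms(1) by (rule weight_pattern_fibre_measurable)
  fix \<sigma> \<sigma>'
  assume same: "weight_pattern r n V \<sigma>' = weight_pattern r n V \<sigma>"
  have "alg1_output r n V E \<sigma>' = alg1_output r n V E \<sigma>"
    by (rule ext) (rule alg1_output_weight_pattern[OF same assms(2)])
  then have "C0 r n V E \<sigma>' = C0 r n V E \<sigma>"
    unfolding C0_def by simp
  moreover have "inj_on \<sigma>' V \<longleftrightarrow> inj_on \<sigma> V"
    by (rule inj_on_weight_pattern[OF same])
  moreover assume "\<sigma> \<in> {\<sigma> \<in> space (weight_space V). inj_on \<sigma> V \<and> has_mono_edge E (C0 r n V E \<sigma>)}"
    "\<sigma>' \<in> space (weight_space V)"
  ultimately show "\<sigma>' \<in> {\<sigma> \<in> space (weight_space V). inj_on \<sigma> V \<and> has_mono_edge E (C0 r n V E \<sigma>)}"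
    by simp
qed auto

section \<open>The union bound\<close>

lemma measure_UN_le_sum:
  assumes "finite I" "\<And>i. i \<in> I \<Longrightarrow> X i \<in> sets M" "\<And>i. i \<in> I \<Longrightarrow> measure M (X i) \<le> c i"
  shows "measure M (\<Union>i\<in>I. X i) \<le> (\<Sum>i\<in>I. c i)"
proof -
  have "measure M (\<Union>i\<in>I. X i) \<le> (\<Sum>i\<in>I. measure M (X i))"
    using assms(1,2) by (rule measure_UNION_le)
  also have "\<dots> \<le> (\<Sum>i\<in>I. c i)"
    using assms(3) by (rule sum_mono)
  finally show ?thesis .
qed

lemma recolouring_chain_restrict:
  "recolouring_chain r n E \<sigma> k l es W \<Longrightarrow> recolouring_chain r n E \<sigma> k l (restrict es {0..l}) W"
  by (auto simp: recolouring_chain_def recolouring_path_def)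

context alg1_hypergraph
begin

definition out_of_range :: "('a \<Rightarrow> real) set" where
  "out_of_range = {\<sigma> \<in> space (weight_space V). \<exists>v\<in>V. \<sigma> v \<notin> {0..<1}}"

definition BigI_event :: "nat \<Rightarrow> 'a set \<Rightarrow> ('a \<Rightarrow> real) set" where
  "BigI_event i e = {\<sigma> \<in> space (weight_space V). \<forall>u\<in>e. \<sigma> u \<in> BigI r n i}"

definition chain_event :: "nat \<Rightarrow> nat \<Rightarrow> nat \<Rightarrow> (nat \<Rightarrow> 'a set) \<Rightarrow> (nat \<Rightarrow> nat) \<Rightarrow> ('a \<Rightarrow> real) set"
  where
  "chain_event m k l es ss = (if simple_chain E l es then chain_box V m k l es ss else {})"

definition BigI_events :: "('a \<Rightarrow> real) set" where
  "BigI_events = (\<Union>i\<in>{1..r}. \<Union>e\<in>E. BigI_event i e)"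

definition chain_events :: "nat \<Rightarrow> nat \<Rightarrow> nat \<Rightarrow> ('a \<Rightarrow> real) set" where
  "chain_events m k l =
     (\<Union>es\<in>PiE {0..l} (\<lambda>_. E). \<Union>ss\<in>PiE {1..l} (\<lambda>_. {..<m}). chain_event m k l es ss)"

definition chain_bound :: "nat \<Rightarrow> nat \<Rightarrow> real" where
  "chain_bound m l =
     cell_width m ^ l * a ^ ((l + 1) * n - 2 * l) * exp (real n * (real l * (b + cell_width m)) / a)"

lemma finite_E: "finite E"
proof (rule finite_subset)
  show "E \<subseteq> Pow V"
    using uniform_edges by auto
qed (use finite_V in simp)

lemma monochromatic_event_subset:
  assumes "m \<ge> 1"
  shows "{\<sigma> \<in> space (weight_space V). inj_on \<sigma> V \<and> has_mono_edge E (C0 r n V E \<sigma>)} \<subseteq>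
    out_of_range \<union> BigI_events \<union> (\<Union>k\<in>{2..r}. \<Union>l\<in>{1..<k}. chain_events m k l)"
proof
  fix \<sigma>
  assume "\<sigma> \<in> {\<sigma> \<in> space (weight_space V). inj_on \<sigma> V \<and> has_mono_edge E (C0 r n V E \<sigma>)}"
  then have \<sigma>: "\<sigma> \<in> space (weight_space V)" "inj_on \<sigma> V" "has_mono_edge E (C0 r n V E \<sigma>)"
    by auto
  show "\<sigma> \<in> out_of_range \<union> BigI_events \<union> (\<Union>k\<in>{2..r}. \<Union>l\<in>{1..<k}. chain_events m k l)"
  proof (cases "\<sigma> \<in> out_of_range")
    case False
    then have weights: "\<forall>v\<in>V. 0 \<le> \<sigma> v \<and> \<sigma> v < 1"
      using \<sigma>(1) unfolding out_of_range_def by auto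
    have edges: "\<forall>e\<in>E. e \<subseteq> V"
      using uniform_edges by blast
    interpret run: alg1_run r n V E \<sigma> "C0 r n V E \<sigma>"
      using alg1_output_C0[OF finite_V weights] finite_V edges weights \<sigma>(2)
      by unfold_locales
    obtain e k where e: "e \<in> E" "\<forall>u\<in>e. C0 r n V E \<sigma> u = k"
      using \<sigma>(3) unfolding has_mono_edge_def by blast
    moreover have "e \<noteq> {}"
      using e(1) uniform_edges two_le_n by fastforce
    ultimately consider i where "i \<in> {1..r}" "\<forall>u\<in>e. \<sigma> u \<in> BigI r n i"
      | l es W where "2 \<le> k" "k \<le> r" "1 \<le> l" "l < k" "recolouring_chain r n E \<sigma> k l es W"
      using run.monochromatic_edge_cases[OF e(1) \<open>e \<noteq> {}\<close> e(2)] by blast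
    then show ?thesis
    proof cases
      case 1
      then have "\<sigma> \<in> BigI_event i e"
        using \<sigma>(1) unfolding BigI_event_def by blast
      then have "\<sigma> \<in> BigI_events"
        unfolding BigI_events_def using 1(1) e(1) by blast
      then show ?thesis
        by (rule UnI1[OF UnI2])
    next
      case (2 l es W)
      then have chain: "recolouring_chain r n E \<sigma> k l (restrict es {0..l}) W"
        by (simp add: recolouring_chain_restrict)
      obtain ss where ss: "ss \<in> PiE {1..l} (\<lambda>_. {..<m})"
        and box: "\<sigma> \<in> chain_box V m k l (restrict es {0..l}) ss"
        using chain_in_box[OF chain 2(3,4) assms \<sigma>(1)] by blast
      have "simple_chain E l (restrict es {0..l})"
        using recolouring_chain_simple[OF chain 2(4)] .
      then have "\<sigma> \<in> chain_event m k l (restrict es {0..l}) ss"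
        using box unfolding chain_event_def by simp
      moreover have "restrict es {0..l} \<in> PiE {0..l} (\<lambda>_. E)"
        using recolouring_chain_edges[OF chain] by (simp add: restrict_PiE_iff)
      moreover have "k \<in> {2..r}" "l \<in> {1..<k}"
        using 2 by simp_all
      ultimately have "\<sigma> \<in> (\<Union>k\<in>{2..r}. \<Union>l\<in>{1..<k}. chain_events m k l)"
        unfolding chain_events_def using ss by blast
      then show ?thesis
        by (rule UnI2)
    qed
  qed simp
qed

lemma out_of_range_null:
  "out_of_range \<in> sets (weight_space V)" "measure (weight_space V) out_of_range = 0"
proof -
  have "{v} \<subseteq> V \<Longrightarrow> {\<sigma> \<in> space (weight_space V). \<forall>t\<in>{v}. \<forall>u\<in>{t}. \<sigma> u \<in> - {0..<1}}
      \<in> sets (weight_space V) \<and>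
    measure (weight_space V) {\<sigma> \<in> space (weight_space V). \<forall>t\<in>{v}. \<forall>u\<in>{t}. \<sigma> u \<in> - {0..<1}}
      = measure uniform01 (- {0..<1}) ^ card {v}" for v
    using weight_space_grouped_box[OF finite_V, of "{v}" "\<lambda>t. {t}" "\<lambda>_. - {0..<1}"]
    by (simp add: disjoint_family_on_def)
  then have "{\<sigma> \<in> space (weight_space V). \<sigma> v \<notin> {0..<1}} \<in> sets (weight_space V)"
    "measure (weight_space V) {\<sigma> \<in> space (weight_space V). \<sigma> v \<notin> {0..<1}} \<le> 0"
    if "v \<in> V" for v
    using that by auto
  moreover have "out_of_range = (\<Union>v\<in>V. {\<sigma> \<in> space (weight_space V). \<sigma> v \<notin> {0..<1}})"
    unfolding out_of_range_def by auto
  ultimately show "out_of_range \<in> sets (weight_space V)" "measure (weight_space V) out_of_range = 0"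
    using sets.finite_UN[OF finite_V, of "\<lambda>v. {\<sigma> \<in> space (weight_space V). \<sigma> v \<notin> {0..<1}}"]
      measure_UN_le_sum[OF finite_V, of "\<lambda>v. {\<sigma> \<in> space (weight_space V). \<sigma> v \<notin> {0..<1}}"
        "weight_space V" "\<lambda>_. 0"]
    by (simp_all add: measure_le_0_iff)
qed

lemma BigI_event_bound:
  assumes "e \<in> E"
  shows "BigI_event i e \<in> sets (weight_space V)" "measure (weight_space V) (BigI_event i e) \<le> a ^ n"
proof -
  have "e \<subseteq> V" "card e = n"
    using assms uniform_edges by auto
  then have "BigI_event i e \<in> sets (weight_space V) \<and>
    measure (weight_space V) (BigI_event i e) = measure uniform01 (BigI r n i) ^ n"
    using weight_space_grouped_box[OF finite_V, of "{e}" "\<lambda>t. t" "\<lambda>_. BigI r n i"]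
    unfolding BigI_event_def by (simp add: disjoint_family_on_def BigI_eq)
  moreover have "measure uniform01 (BigI r n i) \<le> a"
    unfolding BigI_eq small_start_def
    using measure_uniform01_atLeastLessThan[of "big_start r n i" "big_start r n i + a"] big_width_pos
    by simp
  ultimately show "BigI_event i e \<in> sets (weight_space V)" "measure (weight_space V) (BigI_event i e) \<le> a ^ n"
    by (auto intro: power_mono)
qed

lemma chain_event_bound:
  assumes "1 \<le> l" "l < k" "m \<ge> 1" "ss \<in> PiE {1..l} (\<lambda>_. {..<m})"
  shows "chain_event m k l es ss \<in> sets (weight_space V)"
    "measure (weight_space V) (chain_event m k l es ss) \<le> chain_bound m l"
proof -
  have "0 \<le> chain_bound m l"
    unfolding chain_bound_def using big_width_pos cell_width_pos[OF assms(3)] by simp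
  then show "chain_event m k l es ss \<in> sets (weight_space V)"
    "measure (weight_space V) (chain_event m k l es ss) \<le> chain_bound m l"
    using chain_box_measure(1) chain_box_bound[OF _ assms]
    unfolding chain_event_def chain_bound_def by auto
qed

lemma BigI_events_bound:
  "BigI_events \<in> sets (weight_space V)"
  "measure (weight_space V) BigI_events \<le> real r * (real (card E) * a ^ n)"
proof -
  have edges_sets: "(\<Union>e\<in>E. BigI_event i e) \<in> sets (weight_space V)" for i
    by (rule sets.finite_UN[OF finite_E BigI_event_bound(1)])
  have edges_le: "measure (weight_space V) (\<Union>e\<in>E. BigI_event i e) \<le> real (card E) * a ^ n" for i
    using measure_UN_le_sum[OF finite_E BigI_event_bound] by simp
  show "BigI_events \<in> sets (weight_space V)"
    "measure (weight_space V) BigI_events \<le> real r * (real (card E) * a ^ n)"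
    unfolding BigI_events_def
    using measure_UN_le_sum[of "{1..r}" "\<lambda>i. \<Union>e\<in>E. BigI_event i e" "weight_space V"
        "\<lambda>_. real (card E) * a ^ n"] edges_sets edges_le
    by (auto intro: sets.finite_UN)
qed

lemma chain_events_bound:
  assumes "1 \<le> l" "l < k" "m \<ge> 1"
  shows "chain_events m k l \<in> sets (weight_space V)"
    "measure (weight_space V) (chain_events m k l) \<le> real (card E) ^ (l + 1) * real m ^ l * chain_bound m l"
proof -
  have finite_cells: "finite (PiE {1..l} (\<lambda>_. {..<m}))"
    by (intro finite_PiE) auto
  have finite_edges: "finite (PiE {0..l} (\<lambda>_. E))"
    using finite_E by (intro finite_PiE) auto
  note cell_events = chain_event_bound[OF assms]
  have es_sets: "(\<Union>ss\<in>PiE {1..l} (\<lambda>_. {..<m}). chain_event m k l es ss) \<in> sets (weight_space V)"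
    for es
    by (rule sets.finite_UN[OF finite_cells cell_events(1)])
  have es_le: "measure (weight_space V) (\<Union>ss\<in>PiE {1..l} (\<lambda>_. {..<m}). chain_event m k l es ss)
      \<le> real m ^ l * chain_bound m l" for es
    using measure_UN_le_sum[OF finite_cells cell_events] by (simp add: card_PiE)
  show "chain_events m k l \<in> sets (weight_space V)"
    unfolding chain_events_def by (rule sets.finite_UN[OF finite_edges es_sets])
  show "measure (weight_space V) (chain_events m k l) \<le>
      real (card E) ^ (l + 1) * real m ^ l * chain_bound m l"
    using measure_UN_le_sum[OF finite_edges es_sets es_le]
    unfolding chain_events_def by (simp add: card_PiE mult.assoc)
qed

lemma monochromatic_event_bound:
  assumes m: "m \<ge> 1"
  shows "measure (weight_space V) {\<sigma> \<in> space (weight_space V). inj_on \<sigma> V \<and> has_mono_edge E (C0 r n V E \<sigma>)}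
    \<le> real r * (real (card E) * a ^ n) +
      (\<Sum>k\<in>{2..r}. \<Sum>l\<in>{1..<k}. real (card E) ^ (l + 1) * real m ^ l * chain_bound m l)"
proof -
  interpret weights: prob_space "weight_space V"
    by (rule prob_space_weight_space)
  let ?chains = "\<Union>k\<in>{2..r}. \<Union>l\<in>{1..<k}. chain_events m k l"
  have k_sets: "(\<Union>l\<in>{1..<k}. chain_events m k l) \<in> sets (weight_space V)" for k
    using chain_events_bound(1)[OF _ _ m] by (intro sets.finite_UN) auto
  have k_le: "measure (weight_space V) (\<Union>l\<in>{1..<k}. chain_events m k l) \<le>
      (\<Sum>l\<in>{1..<k}. real (card E) ^ (l + 1) * real m ^ l * chain_bound m l)" for k
    using chain_events_bound[OF _ _ m] by (intro measure_UN_le_sum) auto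
  have chains: "?chains \<in> sets (weight_space V)"
    "measure (weight_space V) ?chains \<le>
      (\<Sum>k\<in>{2..r}. \<Sum>l\<in>{1..<k}. real (card E) ^ (l + 1) * real m ^ l * chain_bound m l)"
    using sets.finite_UN[OF finite_atLeastAtMost k_sets] measure_UN_le_sum[OF finite_atLeastAtMost k_sets k_le]
    by simp_all
  note events = out_of_range_null BigI_events_bound chains
  have "measure (weight_space V)
      {\<sigma> \<in> space (weight_space V). inj_on \<sigma> V \<and> has_mono_edge E (C0 r n V E \<sigma>)}
    \<le> measure (weight_space V) (out_of_range \<union> BigI_events \<union> ?chains)"
    using monochromatic_event_subset[OF m] events by (intro weights.finite_measure_mono) auto
  also have "\<dots> \<le> measure (weight_space V) (out_of_range \<union> BigI_events) + measure (weight_space V) ?chains"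
    by (rule measure_Un_le) (use events in auto)
  also have "measure (weight_space V) (out_of_range \<union> BigI_events) \<le>
      measure (weight_space V) out_of_range + measure (weight_space V) BigI_events"
    by (rule measure_Un_le) (use events in auto)
  finally show ?thesis
    using events by simp
qed

end

section \<open>Numerical estimates\<close>

lemma exp_mult_one_minus_power_le:
  fixes p :: real
  assumes "p \<le> 1"
  shows "exp (p * real n) * (1 - p) ^ n \<le> 1"
proof -
  have "(1 - p) ^ n \<le> exp (- p) ^ n"
    using assms exp_ge_add_one_self[of "- p"] by (intro power_mono) simp_all
  also have "\<dots> = exp (- (p * real n))"
    by (simp add: exp_of_nat_mult[symmetric] algebra_simps)
  finally show ?thesis
    by (simp add: exp_minus field_simps)
qed

lemma sum_power_le_twice:
  fixes Z :: real
  assumes "0 \<le> Z" "Z \<le> 1/2"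
  shows "(\<Sum>l\<in>{1..<k}. Z ^ l) \<le> 2 * Z"
proof -
  have "(\<Sum>l\<in>{1..<k}. Z ^ l) \<le> 2 * Z - 2 * Z ^ k" if "1 \<le> k" for k
    using that
  proof (induction k rule: dec_induct)
    case (step k)
    have "Z * Z ^ k \<le> 1 / 2 * Z ^ k"
      using assms by (intro mult_right_mono) simp_all
    then show ?case
      using step.IH step.hyps by simp
  qed simp
  show ?thesis
  proof (cases "1 \<le> k")
    case True
    then show ?thesis
      using \<open>1 \<le> k \<Longrightarrow> (\<Sum>l\<in>{1..<k}. Z ^ l) \<le> 2 * Z - 2 * Z ^ k\<close> zero_le_power[OF assms(1), of k]
      by linarith
  qed (use assms in simp)
qed

context alg1_hypergraph
begin

lemma chain_term_eq:
  "real (card E) ^ (l + 1) * real n ^ l * chain_bound n l =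
    (real (card E) * a ^ n) * (real (card E) * b * a ^ (n - 2) * exp (real n * (b + cell_width n) / a)) ^ l"
proof -
  let ?h = "cell_width n"
  have "(l + 1) * n - 2 * l = n + (n - 2) * l"
    using two_le_n by (simp add: algebra_simps diff_mult_distrib2)
  then have powers: "a ^ ((l + 1) * n - 2 * l) = a ^ n * (a ^ (n - 2)) ^ l"
    by (simp add: power_add power_mult)
  have "exp (real n * (real l * (b + ?h)) / a) = exp (real n * (b + ?h) / a) ^ l"
    by (simp add: exp_of_nat_mult[symmetric] algebra_simps)
  then have "real (card E) ^ (l + 1) * real n ^ l * chain_bound n l =
      real (card E) * real (card E) ^ l * (real n * ?h) ^ l * (a ^ n * (a ^ (n - 2)) ^ l) *
      exp (real n * (b + ?h) / a) ^ l"
    unfolding chain_bound_def powers power_mult_distrib by (simp add: mult_ac)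
  also have "real n * ?h = b"
    using two_le_n by (simp add: cell_width_def)
  finally show ?thesis
    by (simp add: power_mult_distrib algebra_simps)
qed

lemma big_width_power: "a ^ j = (1 - pcol r n) ^ j / real r ^ j"
  by (simp add: big_width_def power_divide)

context
  assumes edge_count: "real (card E) \<le> 0.01 * exp (pcol r n * real n) * real r ^ (n - 1)"
begin

lemma first_term_le: "real r * (real (card E) * a ^ n) \<le> 0.01"
proof -
  have "real r * real r ^ (n - 1) = real r ^ n"
    using two_le_n by (simp add: power_eq_if)
  have "real r * (real (card E) * a ^ n) \<le> real r * (0.01 * exp (pcol r n * real n) * real r ^ (n - 1) * a ^ n)"
    using edge_count big_width_pos two_le_r by (intro mult_left_mono mult_right_mono) simp_all
  also have "\<dots> = 0.01 * exp (pcol r n * real n) * (real r * real r ^ (n - 1)) * a ^ n"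
    by (simp add: algebra_simps)
  also have "\<dots> = 0.01 * (exp (pcol r n * real n) * (1 - pcol r n) ^ n)"
    using two_le_r unfolding \<open>real r * real r ^ (n - 1) = real r ^ n\<close> big_width_power by simp
  also have "\<dots> \<le> 0.01"
    using exp_mult_one_minus_power_le[of "pcol r n" n] pcol_less_1 by simp
  finally show ?thesis .
qed

lemma second_factor_le:
  defines "L \<equiv> ln (real n / ln (real n))"
  assumes L: "0 < L" "L \<le> ln (real n)" and p: "pcol r n \<le> 1/4"
    and excess: "L * (1 / real n + pcol r n) / (1 - pcol r n) \<le> 1"
  shows "real (card E) * b * a ^ (n - 2) * exp (real n * (b + cell_width n) / a) \<le> 1/2"
proof -
  let ?p = "pcol r n"
  let ?h = "cell_width n"
  have ln_n: "0 < ln (real n)" "0 < real n / ln (real n)"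
    using L two_le_n by auto
  have "1 - ?p \<ge> 3/4"
    using p by simp
  have r_b: "real r * b = L / real n"
    using two_le_r two_le_n unfolding small_width_def pcol_def L_def by (simp add: field_simps)
  obtain n' where "n = n' + 2"
    using two_le_n by (metis add.commute le_Suc_ex)
  then have "real r * real r ^ (n - 2) = real r ^ (n - 1)" "(1 - ?p) ^ (n - 2) * (1 - ?p) ^ 2 = (1 - ?p) ^ n"
    by (simp_all add: power_add power2_eq_square)
  then have "exp (?p * real n) * (1 - ?p) ^ (n - 2) * (1 - ?p) ^ 2 \<le> 1"
    using exp_mult_one_minus_power_le[of ?p n] pcol_less_1 by (simp add: mult.assoc)
  then have exp_power: "exp (?p * real n) * (1 - ?p) ^ (n - 2) \<le> 1 / (1 - ?p) ^ 2"
    using pcol_less_1 by (simp add: field_simps)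
  have "real n * (b + ?h) / a = (real n + 1) * (real r * b) / (1 - ?p)"
    using two_le_n two_le_r pcol_less_1 unfolding cell_width_def big_width_def by (simp add: field_simps)
  also have "\<dots> = L + L * (1 / real n + ?p) / (1 - ?p)"
    unfolding r_b using two_le_n pcol_less_1 by (simp add: field_simps)
  finally have "exp (real n * (b + ?h) / a) \<le> exp (L + 1)"
    using excess by simp
  also have "\<dots> = real n / ln (real n) * exp 1"
    using ln_n unfolding L_def by (simp add: exp_add)
  finally have exp_bound: "exp (real n * (b + ?h) / a) \<le> real n / ln (real n) * exp 1" .
  have "real (card E) * b * a ^ (n - 2) * exp (real n * (b + ?h) / a)
      \<le> (0.01 * exp (?p * real n) * real r ^ (n - 1)) * b * a ^ (n - 2) * exp (real n * (b + ?h) / a)"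
    using edge_count big_width_pos small_width_pos by (intro mult_right_mono) simp_all
  also have "\<dots> = 0.01 * (exp (?p * real n) * (1 - ?p) ^ (n - 2)) * (real r * b) * exp (real n * (b + ?h) / a)"
    using two_le_r unfolding big_width_power \<open>real r * real r ^ (n - 2) = real r ^ (n - 1)\<close>[symmetric]
    by (simp add: field_simps)
  also have "\<dots> \<le> 0.01 * (1 / (1 - ?p) ^ 2) * (L / real n) * (real n / ln (real n) * exp 1)"
    unfolding r_b using exp_power exp_bound L two_le_n by (intro mult_mono mult_left_mono) simp_all
  also have "\<dots> = 0.01 * exp 1 * (L / ln (real n)) / (1 - ?p) ^ 2"
    using two_le_n by (simp add: field_simps)
  also have "\<dots> \<le> 0.01 * 3 * 1 / (3/4) ^ 2"
    using L ln_n exp_le \<open>1 - ?p \<ge> 3/4\<close>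
    by (intro divide_mono mult_mono power_mono) simp_all
  also have "\<dots> \<le> 1/2"
    by (simp add: power2_eq_square)
  finally show ?thesis .
qed

lemma monochromatic_probability_le:
  defines "L \<equiv> ln (real n / ln (real n))"
  assumes L: "0 < L" "L \<le> ln (real n)" and p: "pcol r n \<le> 1/4"
    and excess: "L * (1 / real n + pcol r n) / (1 - pcol r n) \<le> 1"
  shows "measure (weight_space V)
    {\<sigma> \<in> space (weight_space V). inj_on \<sigma> V \<and> has_mono_edge E (C0 r n V E \<sigma>)} \<le> 0.04 * exp 1"
proof -
  define Y where "Y = real (card E) * a ^ n"
  \<comment> \<open>With \<open>n\<close> cells per \<open>\<delta>\<close>-interval, pinning a link weight to its cell costs a factor
    \<open>exp (n h / a)\<close> that stays bounded.\<close>
  define Z where "Z = real (card E) * b * a ^ (n - 2) * exp (real n * (b + cell_width n) / a)"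
  have "0 \<le> Y" "0 \<le> Z"
    unfolding Y_def Z_def using big_width_pos small_width_pos by simp_all
  have "Z \<le> 1/2"
    unfolding Z_def using second_factor_le[OF L[unfolded L_def] p excess[unfolded L_def]] .
  have "(\<Sum>l\<in>{1..<k}. Y * Z ^ l) \<le> Y" for k
  proof -
    have "(\<Sum>l\<in>{1..<k}. Y * Z ^ l) = Y * (\<Sum>l\<in>{1..<k}. Z ^ l)"
      by (simp add: sum_distrib_left)
    also have "\<dots> \<le> Y * 1"
      using sum_power_le_twice[OF \<open>0 \<le> Z\<close> \<open>Z \<le> 1/2\<close>, of k] \<open>Z \<le> 1/2\<close> \<open>0 \<le> Y\<close>
      by (intro mult_left_mono) simp_all
    finally show ?thesis
      by simp
  qed
  then have "(\<Sum>k\<in>{2..r}. \<Sum>l\<in>{1..<k}. Y * Z ^ l) \<le> (\<Sum>k\<in>{2..r}. Y)"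
    by (rule sum_mono)
  also have "\<dots> \<le> real r * Y"
    using \<open>0 \<le> Y\<close> by (simp add: mult_right_mono)
  finally have "(\<Sum>k\<in>{2..r}. \<Sum>l\<in>{1..<k}. Y * Z ^ l) \<le> real r * Y" .
  moreover have "measure (weight_space V)
      {\<sigma> \<in> space (weight_space V). inj_on \<sigma> V \<and> has_mono_edge E (C0 r n V E \<sigma>)}
      \<le> real r * Y + (\<Sum>k\<in>{2..r}. \<Sum>l\<in>{1..<k}. Y * Z ^ l)"
    using monochromatic_event_bound[of n] two_le_n unfolding chain_term_eq Y_def Z_def by simp
  moreover have "real r * Y \<le> 0.01"
    unfolding Y_def by (rule first_term_le)
  moreover have "0.02 \<le> 0.04 * exp (1::real)"
    using exp_ge_add_one_self[of 1] by simp
  ultimately show ?thesis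
    by linarith
qed

end

end

lemma ln_bounds_16384:
  fixes x :: real
  assumes x: "16384 \<le> x"
  shows "1 \<le> ln x" "ln x * (1 + ln x) \<le> x / 4"
proof -
  have "0 < x"
    using x by simp
  show "1 \<le> ln x"
    using exp_le x \<open>0 < x\<close> by (simp add: ln_ge_iff)
  have "ln (x powr (1/4)) \<le> x powr (1/4) - 1"
    using \<open>0 < x\<close> by (intro ln_le_minus_one) simp
  then have ln_le: "ln x \<le> 4 * x powr (1/4)"
    using \<open>0 < x\<close> by (simp add: ln_powr)
  have "x powr (1/4) * x powr (1/4) = sqrt x"
    using \<open>0 < x\<close> by (simp add: powr_add[symmetric] powr_half_sqrt[symmetric])
  have "sqrt (16384::real) = 128"
    by (simp add: real_sqrt_unique[of 128])
  then have "128 \<le> sqrt x"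
    using real_sqrt_le_mono[OF x] by simp
  have "ln x * (1 + ln x) \<le> 2 * (ln x * ln x)"
    using \<open>1 \<le> ln x\<close> by (simp add: algebra_simps)
  also have "\<dots> \<le> 2 * ((4 * x powr (1/4)) * (4 * x powr (1/4)))"
    using ln_le \<open>1 \<le> ln x\<close> by (intro mult_left_mono mult_mono) simp_all
  also have "\<dots> = 32 * sqrt x"
    using \<open>x powr (1/4) * x powr (1/4) = sqrt x\<close> by simp
  also have "\<dots> \<le> sqrt x * sqrt x / 4"
    using mult_right_mono[OF \<open>128 \<le> sqrt x\<close>, of "sqrt x"] \<open>0 < x\<close> by simp
  also have "\<dots> = x / 4"
    using \<open>0 < x\<close> by simp
  finally show "ln x * (1 + ln x) \<le> x / 4" .
qed

lemma large_n_parameters: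
  assumes n: "16384 \<le> n" and r: "2 \<le> r"
  defines "L \<equiv> ln (real n / ln (real n))"
  shows "0 < L" "L \<le> ln (real n)" "0 < pcol r n" "pcol r n \<le> 1/4"
    "L * (1 / real n + pcol r n) / (1 - pcol r n) \<le> 1"
proof -
  have x: "16384 \<le> real n"
    using n by simp
  note ln_n = ln_bounds_16384[OF x]
  have "0 < real n"
    using x by simp
  have "ln (real n) < real n"
    using \<open>0 < real n\<close> by (rule ln_less_self)
  then have "1 < real n / ln (real n)"
    using ln_n(1) by simp
  then show "0 < L"
    unfolding L_def by simp
  have "real n / ln (real n) \<le> real n"
    using ln_n(1) \<open>0 < real n\<close> by (simp add: divide_le_eq)
  then show "L \<le> ln (real n)"
    unfolding L_def using \<open>1 < real n / ln (real n)\<close> by simp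
  have r_frac: "0 < (real r - 1) / real r" "(real r - 1) / real r \<le> 1"
    using r by simp_all
  show "0 < pcol r n"
    unfolding pcol_def L_def[symmetric] using r \<open>0 < L\<close> \<open>0 < real n\<close>
    by (intro divide_pos_pos mult_pos_pos) simp_all
  have "(real r - 1) / real r * L \<le> L"
    using mult_right_mono[OF r_frac(2), of L] \<open>0 < L\<close> by simp
  then have "(real r - 1) / real r * L \<le> ln (real n)"
    using \<open>L \<le> ln (real n)\<close> by linarith
  then have "pcol r n \<le> ln (real n) / real n"
    unfolding pcol_def L_def[symmetric] using \<open>0 < real n\<close> by (intro divide_right_mono) simp_all
  moreover have "ln (real n) \<le> real n / 4"
    using ln_n by (smt (verit) mult_le_cancel_left1)
  then have "ln (real n) / real n \<le> 1/4"
    using \<open>0 < real n\<close> by (simp add: divide_le_eq)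
  ultimately show "pcol r n \<le> 1/4"
    by linarith
  have "L * (1 / real n + pcol r n) \<le> ln (real n) * ((1 + ln (real n)) / real n)"
    using \<open>L \<le> ln (real n)\<close> \<open>pcol r n \<le> ln (real n) / real n\<close> \<open>0 < L\<close> \<open>0 < pcol r n\<close>
    by (intro mult_mono) (simp_all add: add_divide_distrib)
  also have "\<dots> \<le> 1/4"
    using ln_n(2) \<open>0 < real n\<close> by (simp add: divide_le_eq)
  finally have "L * (1 / real n + pcol r n) \<le> 1 - pcol r n"
    using \<open>pcol r n \<le> 1/4\<close> by linarith
  then show "L * (1 / real n + pcol r n) / (1 - pcol r n) \<le> 1"
    using \<open>pcol r n \<le> 1/4\<close> by (simp add: divide_le_eq)
qed

lemma pcol_powr:
  assumes "0 < ln (real n)"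
  shows "(real n / ln (real n)) powr ((real r - 1) / real r) = exp (pcol r n * real n)"
proof -
  have "0 < n"
    using assms by (cases "n = 0") auto
  then show ?thesis
    using assms unfolding pcol_def powr_def by (cases "r = 0") (simp_all add: field_simps)
qed

theorem lemma3:
  shows "\<exists>N::nat. \<forall>n r (V::nat set) (E::nat set set).
    n \<ge> N \<and> 2 \<le> r \<and> real r < root 5 (ln (real n)) \<and>
    finite V \<and> E \<subseteq> {e. e \<subseteq> V \<and> card e = n} \<and>
    real (card E) \<le> 0.01 * (real n / ln (real n)) powr ((real r - 1) / real r) * real r ^ (n - 1)
    \<longrightarrow>
    (let A = {\<sigma> \<in> space (weight_space V). inj_on \<sigma> V \<and> has_mono_edge E (C0 r n V E \<sigma>)}
     in A \<in> sets (weight_space V) \<and> measure (weight_space V) A \<le> 0.04 * exp 1)"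
proof (intro exI[of _ 16384] allI impI)
  fix n r :: nat and V :: "nat set" and E :: "nat set set"
  assume "16384 \<le> n \<and> 2 \<le> r \<and> real r < root 5 (ln (real n)) \<and>
    finite V \<and> E \<subseteq> {e. e \<subseteq> V \<and> card e = n} \<and>
    real (card E) \<le> 0.01 * (real n / ln (real n)) powr ((real r - 1) / real r) * real r ^ (n - 1)"
  then have n: "16384 \<le> n" and r: "2 \<le> r" and V: "finite V" and E: "\<forall>e\<in>E. e \<subseteq> V \<and> card e = n"
    and count: "real (card E) \<le> 0.01 * exp (pcol r n * real n) * real r ^ (n - 1)"
    using pcol_powr ln_bounds_16384(1)[of "real n"] by auto
  note parameters = large_n_parameters[OF n r]
  interpret alg1_hypergraph r n V E
    using parameters(3,4) r n V E by unfold_locales simp_all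
  show "let A = {\<sigma> \<in> space (weight_space V). inj_on \<sigma> V \<and> has_mono_edge E (C0 r n V E \<sigma>)}
     in A \<in> sets (weight_space V) \<and> measure (weight_space V) A \<le> 0.04 * exp 1"
    using monochromatic_event_measurable[OF V] E
      monochromatic_probability_le[OF count parameters(1,2,4,5)]
    by simp
qed

end
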